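(* Let $n\in\mathbb{N}$ and $M\models\mathrm{I}\Delta_0+\exp$. If there is a proper end extension $K$ of $M$ with $M\preccurlyeq_{\Sigma_{n+2}}K$ and $K\models M\text{-}\mathrm{I}\Sigma_{n+1}$, then $M\models\mathrm{WR}(\Sigma_{n+1}\wedge\Pi_{n+1})$.
   Context: $M\preccurlyeq_{\Sigma_k}K$: every $\Sigma_k$ formula with parameters from $M$ has the same truth value in $M$ and $K$; end extension: every element of $K\setminus M$ exceeds every element of $M$; proper: $K\neq M$. For an end extension $M\subseteq K$ of models of $\mathrm{I}\Delta_0+\exp$, $K\models M\text{-}\mathrm{I}\Sigma_{n+1}$ means: for every $\Sigma_{n+1}$ formula $\phi(x)$ with parameters from $K$ and every $a\in M$, $K\models\phi(0)\wedge\forall x<a(\phi(x)\to\phi(x+1))\to\forall x<a\,\phi(x)$. $\Sigma_{k}\wedge\Pi_{k}$ is the class of conjunctions of a $\Sigma_k$ and a $\Pi_k$ formula. For a formula $\phi(x,y)$ (possibly with further free variables), $\mathrm{WR}\phi$ is the universal closure of $\forall x\,\exists y<a\,\phi(x,y)\to\exists y<a\,\forall b\,\exists x>b\,\phi(x,y)$, and $\mathrm{WR}\Gamma=\mathrm{I}\Delta_0\cup\{\mathrm{WR}\phi:\phi\in\Gamma\}$. *)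

theory Defs
  imports Main
begin

section \<open>First-order language of arithmetic {0,1,+,*,<} with de Bruijn variables\<close>

datatype trm = Var nat | Zero | One | Plus trm trm | Times trm trm

text \<open>BEx t f : exists x < t. f ; BAll t f : forall x < t. f.
  The bound t is interpreted in the outer environment; the bound variable is index 0 in f.\<close>
datatype fm =
    Eq trm trm | Lt trm trm
  | Neg fm | Conj fm fm | Disj fm fm
  | Ex fm | All fm
  | BEx trm fm | BAll trm fm

record 'a struc =
  univ :: "'a set"
  zer :: 'a
  one :: 'a
  pl  :: "'a \<Rightarrow> 'a \<Rightarrow> 'a"
  tm  :: "'a \<Rightarrow> 'a \<Rightarrow> 'a"
  ls  :: "'a \<Rightarrow> 'a \<Rightarrow> bool"

definition cons_env :: "'a \<Rightarrow> (nat \<Rightarrow> 'a) \<Rightarrow> nat \<Rightarrow> 'a" (infixr "##" 65) where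
  "x ## e = case_nat x e"

fun evt :: "'a struc \<Rightarrow> (nat \<Rightarrow> 'a) \<Rightarrow> trm \<Rightarrow> 'a" where
  "evt S e (Var i) = e i"
| "evt S e Zero = zer S"
| "evt S e One = one S"
| "evt S e (Plus s t) = pl S (evt S e s) (evt S e t)"
| "evt S e (Times s t) = tm S (evt S e s) (evt S e t)"

fun sat :: "'a struc \<Rightarrow> (nat \<Rightarrow> 'a) \<Rightarrow> fm \<Rightarrow> bool" where
  "sat S e (Eq s t) = (evt S e s = evt S e t)"
| "sat S e (Lt s t) = ls S (evt S e s) (evt S e t)"
| "sat S e (Neg f) = (\<not> sat S e f)"
| "sat S e (Conj f g) = (sat S e f \<and> sat S e g)"
| "sat S e (Disj f g) = (sat S e f \<or> sat S e g)"
| "sat S e (Ex f) = (\<exists>x\<in>univ S. sat S (x ## e) f)"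
| "sat S e (All f) = (\<forall>x\<in>univ S. sat S (x ## e) f)"
| "sat S e (BEx t f) = (\<exists>x\<in>univ S. ls S x (evt S e t) \<and> sat S (x ## e) f)"
| "sat S e (BAll t f) = (\<forall>x\<in>univ S. ls S x (evt S e t) \<longrightarrow> sat S (x ## e) f)"

definition env :: "'a struc \<Rightarrow> (nat \<Rightarrow> 'a) \<Rightarrow> bool" where
  "env S e \<longleftrightarrow> range e \<subseteq> univ S"

fun delta0 :: "fm \<Rightarrow> bool" where
  "delta0 (Eq s t) = True"
| "delta0 (Lt s t) = True"
| "delta0 (Neg f) = delta0 f"
| "delta0 (Conj f g) = (delta0 f \<and> delta0 g)"
| "delta0 (Disj f g) = (delta0 f \<and> delta0 g)"
| "delta0 (Ex f) = False"
| "delta0 (All f) = False"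
| "delta0 (BEx t f) = delta0 f"
| "delta0 (BAll t f) = delta0 f"

inductive sigma :: "nat \<Rightarrow> fm \<Rightarrow> bool" and pi :: "nat \<Rightarrow> fm \<Rightarrow> bool" where
  s0: "delta0 f \<Longrightarrow> sigma 0 f"
| p0: "delta0 f \<Longrightarrow> pi 0 f"
| sS: "pi k f \<Longrightarrow> sigma (Suc k) f"
| sEx: "sigma (Suc k) f \<Longrightarrow> sigma (Suc k) (Ex f)"
| pS: "sigma k f \<Longrightarrow> pi (Suc k) f"
| pAll: "pi (Suc k) f \<Longrightarrow> pi (Suc k) (All f)"

definition sigma_and_pi :: "nat \<Rightarrow> fm \<Rightarrow> bool" where
  "sigma_and_pi k h \<longleftrightarrow> (\<exists>f g. h = Conj f g \<and> sigma k f \<and> pi k g)"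

definition wf_struc :: "'a struc \<Rightarrow> bool" where
  "wf_struc S \<longleftrightarrow> zer S \<in> univ S \<and> one S \<in> univ S \<and>
     (\<forall>x\<in>univ S. \<forall>y\<in>univ S. pl S x y \<in> univ S \<and> tm S x y \<in> univ S)"

text \<open>PA^- (axioms of the non-negative parts of discretely ordered rings), Kaye.\<close>
definition PA_minus :: "'a struc \<Rightarrow> bool" where
  "PA_minus S \<longleftrightarrow> wf_struc S \<and>
   (let U = univ S; p = pl S; t = tm S; l = ls S; z = zer S; u = one S in
   (\<forall>x\<in>U. \<forall>y\<in>U. \<forall>w\<in>U. p (p x y) w = p x (p y w) \<and> t (t x y) w = t x (t y w)
       \<and> t x (p y w) = p (t x y) (t x w)) \<and>
   (\<forall>x\<in>U. \<forall>y\<in>U. p x y = p y x \<and> t x y = t y x) \<and>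
   (\<forall>x\<in>U. p x z = x \<and> t x z = z \<and> t x u = x) \<and>
   (\<forall>x\<in>U. \<forall>y\<in>U. \<forall>w\<in>U. l x y \<and> l y w \<longrightarrow> l x w) \<and>
   (\<forall>x\<in>U. \<not> l x x) \<and>
   (\<forall>x\<in>U. \<forall>y\<in>U. l x y \<or> x = y \<or> l y x) \<and>
   (\<forall>x\<in>U. \<forall>y\<in>U. \<forall>w\<in>U. l x y \<longrightarrow> l (p x w) (p y w)) \<and>
   (\<forall>x\<in>U. \<forall>y\<in>U. \<forall>w\<in>U. l z w \<and> l x y \<longrightarrow> l (t x w) (t y w)) \<and>
   (\<forall>x\<in>U. \<forall>y\<in>U. l x y \<longrightarrow> (\<exists>w\<in>U. p x w = y)) \<and>
   l z u \<and>
   (\<forall>x\<in>U. l z x \<longrightarrow> (u = x \<or> l u x)) \<and>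
   (\<forall>x\<in>U. z = x \<or> l z x))"

text \<open>Induction for Delta_0 formulas with parameters; variable 0 is the induction variable.\<close>
definition IDelta0 :: "'a struc \<Rightarrow> bool" where
  "IDelta0 S \<longleftrightarrow> PA_minus S \<and>
    (\<forall>f e. delta0 f \<longrightarrow> env S e \<longrightarrow>
       sat S (zer S ## e) f \<and> (\<forall>x\<in>univ S. sat S (x ## e) f \<longrightarrow> sat S (pl S x (one S) ## e) f)
       \<longrightarrow> (\<forall>x\<in>univ S. sat S (x ## e) f))"

text \<open>The axiom exp: totality of (a Delta_0 definition of) the graph of x \<mapsto> 2^x.
  Over IDelta0 this is equivalent to the usual axiom.\<close>
definition exp_ax :: "'a struc \<Rightarrow> bool" where
  "exp_ax S \<longleftrightarrow> (\<exists>E. delta0 E \<and>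
     (\<forall>e. env S e \<longrightarrow>
        sat S (zer S ## one S ## e) E \<and>
        (\<forall>x\<in>univ S. \<forall>y\<in>univ S. sat S (x ## y ## e) E \<longrightarrow> sat S (pl S x (one S) ## pl S y y ## e) E) \<and>
        (\<forall>x\<in>univ S. \<forall>y\<in>univ S. \<forall>y'\<in>univ S. sat S (x ## y ## e) E \<and> sat S (x ## y' ## e) E \<longrightarrow> y = y') \<and>
        (\<forall>x\<in>univ S. \<exists>y\<in>univ S. sat S (x ## y ## e) E)))"

definition IDelta0_exp :: "'a struc \<Rightarrow> bool" where
  "IDelta0_exp S \<longleftrightarrow> IDelta0 S \<and> exp_ax S"

definition end_extension :: "'a struc \<Rightarrow> 'a struc \<Rightarrow> bool" where
  "end_extension M K \<longleftrightarrow> univ M \<subseteq> univ K \<and> zer M = zer K \<and> one M = one K \<and>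
     (\<forall>x\<in>univ M. \<forall>y\<in>univ M. pl M x y = pl K x y \<and> tm M x y = tm K x y \<and> (ls M x y \<longleftrightarrow> ls K x y)) \<and>
     (\<forall>x\<in>univ K - univ M. \<forall>y\<in>univ M. ls K y x)"

definition sigma_elementary :: "nat \<Rightarrow> 'a struc \<Rightarrow> 'a struc \<Rightarrow> bool" where
  "sigma_elementary k M K \<longleftrightarrow> (\<forall>f e. sigma k f \<longrightarrow> env M e \<longrightarrow> (sat M e f \<longleftrightarrow> sat K e f))"

text \<open>K |= M-I Sigma_k: induction up to elements a of M for Sigma_k formulas with parameters from K.\<close>
definition M_induction :: "nat \<Rightarrow> 'a struc \<Rightarrow> 'a struc \<Rightarrow> bool" where
  "M_induction k M K \<longleftrightarrow> (\<forall>f e a. sigma k f \<longrightarrow> env K e \<longrightarrow> a \<in> univ M \<longrightarrow>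
     sat K (zer K ## e) f \<and> (\<forall>x\<in>univ K. ls K x a \<longrightarrow> sat K (x ## e) f \<longrightarrow> sat K (pl K x (one K) ## e) f)
     \<longrightarrow> (\<forall>x\<in>univ K. ls K x a \<longrightarrow> sat K (x ## e) f))"

text \<open>WR f, for f(x,y,params) with x = var 0, y = var 1, params = remaining variables;
  universal closure over a and the parameters.\<close>
definition WR_holds :: "'a struc \<Rightarrow> fm \<Rightarrow> bool" where
  "WR_holds S f \<longleftrightarrow> (\<forall>e a. env S e \<longrightarrow> a \<in> univ S \<longrightarrow>
     (\<forall>x\<in>univ S. \<exists>y\<in>univ S. ls S y a \<and> sat S (x ## y ## e) f) \<longrightarrow>
     (\<exists>y\<in>univ S. ls S y a \<and> (\<forall>b\<in>univ S. \<exists>x\<in>univ S. ls S b x \<and> sat S (x ## y ## e) f)))"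

definition models_WR :: "'a struc \<Rightarrow> (fm \<Rightarrow> bool) \<Rightarrow> bool" where
  "models_WR S \<Gamma> \<longleftrightarrow> IDelta0 S \<and> (\<forall>f. \<Gamma> f \<longrightarrow> WR_holds S f)"

end

theory Submission
  imports Defs
begin

text \<open>Fix \<open>c \<in> K - M\<close> and an instance of \<open>WR\<close> for \<open>\<sigma> \<and> \<pi>\<close>, with \<open>\<sigma> \<in> \<Sigma>\<^sub>n\<^sub>+\<^sub>1\<close> and
  \<open>\<pi> = \<forall>us. p\<close> in \<open>\<Pi>\<^sub>n\<^sub>+\<^sub>1\<close>, whose hypothesis holds in \<open>M\<close> with bound \<open>a\<close>. It suffices to find
  \<open>y < a\<close> with \<open>K \<Turnstile> \<sigma>(c, y) \<and> \<pi>(c, y)\<close>: then \<open>y \<in> M\<close>, and for every \<open>b \<in> M\<close> the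
  \<open>\<Sigma>\<^sub>n\<^sub>+\<^sub>2\<close> statement \<open>\<exists>x > b. \<sigma>(x, y) \<and> \<pi>(x, y)\<close>, witnessed by \<open>c\<close> in \<open>K\<close>, descends to \<open>M\<close>.

  Suppose there is no such \<open>y\<close>. Read numbers \<open>\<alpha> < 2\<^sup>a\<close> as subsets of \<open>a\<close> (\<open>2\<^sup>a \<in> M\<close> by
  elementarity). By \<open>M\<close>-induction for \<open>\<Sigma>\<^sub>n\<^sub>+\<^sub>1\<close> formulas in \<open>K\<close> there is a maximal \<open>\<alpha> < 2\<^sup>a\<close> for
  which some \<open>G\<close> codes, for every \<open>y \<in> \<alpha>\<close>, a tuple \<open>us\<close> with \<open>\<not> p(us, c, y)\<close>. Adding one more
  such \<open>y\<close> only adds finitely many bits to \<open>G\<close>, so by maximality \<open>\<alpha>\<close> contains every \<open>y < a\<close>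
  with \<open>\<not> \<pi>(c, y)\<close>, in particular every \<open>y < a\<close> with \<open>\<sigma>(c, y)\<close>. Hence \<open>K\<close> satisfies
  \<open>\<exists>x G. (\<forall>y < a. \<sigma>(x, y) \<longrightarrow> y \<in> \<alpha>) \<and> G\<close> codes counterexamples for \<open>\<alpha>\<close>, a \<open>\<Sigma>\<^sub>n\<^sub>+\<^sub>2\<close>
  statement about \<open>\<alpha>, a \<in> M\<close>, so it holds in \<open>M\<close>. For the resulting \<open>x\<close> the \<open>WR\<close> hypothesis
  gives \<open>y < a\<close> with \<open>\<sigma>(x, y) \<and> \<pi>(x, y)\<close>, while \<open>y \<in> \<alpha>\<close> has a coded counterexample to
  \<open>\<pi>(x, y)\<close>.\<close>

lemma cons_env_simps [simp]: "(x ## e) 0 = x" "(x ## e) (Suc i) = e i"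
  by (simp_all add: cons_env_def)

lemma cons_env_numeral [simp]: "(x ## e) (numeral n) = e (pred_numeral n)"
  by (simp add: cons_env_def numeral_eq_Suc)

lemma env_cons: "env S e \<Longrightarrow> x \<in> univ S \<Longrightarrow> env S (x ## e)"
  unfolding env_def image_subset_iff by (auto simp: cons_env_def split: nat.split)

lemma env_const: "x \<in> univ S \<Longrightarrow> env S (\<lambda>_. x)"
  by (simp add: env_def image_subset_iff)

lemma env_mono: "env M e \<Longrightarrow> univ M \<subseteq> univ K \<Longrightarrow> env K e"
  by (auto simp: env_def)

fun rename_trm :: "(nat \<Rightarrow> nat) \<Rightarrow> trm \<Rightarrow> trm" where
  "rename_trm r (Var i) = Var (r i)"
| "rename_trm r Zero = Zero"
| "rename_trm r One = One"
| "rename_trm r (Plus s t) = Plus (rename_trm r s) (rename_trm r t)"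
| "rename_trm r (Times s t) = Times (rename_trm r s) (rename_trm r t)"

definition rename_under :: "(nat \<Rightarrow> nat) \<Rightarrow> nat \<Rightarrow> nat" where
  "rename_under r = case_nat 0 (\<lambda>i. Suc (r i))"

fun rename :: "(nat \<Rightarrow> nat) \<Rightarrow> fm \<Rightarrow> fm" where
  "rename r (Eq s t) = Eq (rename_trm r s) (rename_trm r t)"
| "rename r (Lt s t) = Lt (rename_trm r s) (rename_trm r t)"
| "rename r (Neg f) = Neg (rename r f)"
| "rename r (Conj f g) = Conj (rename r f) (rename r g)"
| "rename r (Disj f g) = Disj (rename r f) (rename r g)"
| "rename r (Ex f) = Ex (rename (rename_under r) f)"
| "rename r (All f) = All (rename (rename_under r) f)"
| "rename r (BEx t f) = BEx (rename_trm r t) (rename (rename_under r) f)"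
| "rename r (BAll t f) = BAll (rename_trm r t) (rename (rename_under r) f)"

abbreviation lift :: "fm \<Rightarrow> fm" where
  "lift \<equiv> rename Suc"

lemma evt_rename_trm [simp]: "evt S e (rename_trm r t) = evt S (e \<circ> r) t"
  by (induct t) auto

lemma cons_env_comp_rename_under: "(x ## e) \<circ> rename_under r = x ## (e \<circ> r)"
  by (rule ext) (simp add: cons_env_def rename_under_def split: nat.split)

lemma sat_rename [simp]: "sat S e (rename r f) = sat S (e \<circ> r) f"
  by (induct f arbitrary: e r) (auto simp: cons_env_comp_rename_under)

lemma size_rename [simp]: "size (rename r f) = size f"
  by (induct f arbitrary: r) auto

lemma delta0_rename [simp]: "delta0 (rename r f) = delta0 f"
  by (induct f arbitrary: r) auto

lemma cons_env_comp_Suc [simp]: "(x ## e) \<circ> Suc = e"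
  by (rule ext) simp

fun subst_trm :: "(nat \<Rightarrow> trm) \<Rightarrow> trm \<Rightarrow> trm" where
  "subst_trm s (Var i) = s i"
| "subst_trm s Zero = Zero"
| "subst_trm s One = One"
| "subst_trm s (Plus a b) = Plus (subst_trm s a) (subst_trm s b)"
| "subst_trm s (Times a b) = Times (subst_trm s a) (subst_trm s b)"

definition subst_under :: "(nat \<Rightarrow> trm) \<Rightarrow> nat \<Rightarrow> trm" where
  "subst_under s = case_nat (Var 0) (\<lambda>i. rename_trm Suc (s i))"

fun subst :: "(nat \<Rightarrow> trm) \<Rightarrow> fm \<Rightarrow> fm" where
  "subst s (Eq a b) = Eq (subst_trm s a) (subst_trm s b)"
| "subst s (Lt a b) = Lt (subst_trm s a) (subst_trm s b)"
| "subst s (Neg f) = Neg (subst s f)"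
| "subst s (Conj f g) = Conj (subst s f) (subst s g)"
| "subst s (Disj f g) = Disj (subst s f) (subst s g)"
| "subst s (Ex f) = Ex (subst (subst_under s) f)"
| "subst s (All f) = All (subst (subst_under s) f)"
| "subst s (BEx t f) = BEx (subst_trm s t) (subst (subst_under s) f)"
| "subst s (BAll t f) = BAll (subst_trm s t) (subst (subst_under s) f)"

lemma evt_subst_trm [simp]: "evt S e (subst_trm s t) = evt S (\<lambda>i. evt S e (s i)) t"
  by (induct t) auto

lemma evt_subst_under: "(\<lambda>i. evt S (x ## e) (subst_under s i)) = x ## (\<lambda>i. evt S e (s i))"
  by (rule ext, case_tac i) (simp_all add: subst_under_def)

lemma sat_subst [simp]: "sat S e (subst s f) = sat S (\<lambda>i. evt S e (s i)) f"
  by (induct f arbitrary: e s) (auto simp: evt_subst_under)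

lemma delta0_subst [simp]: "delta0 (subst s f) = delta0 f"
  by (induct f arbitrary: s) auto

section \<open>Prenex operations on \<open>\<Sigma>\<^sub>k\<close> and \<open>\<Pi>\<^sub>k\<close> formulas\<close>

lemma sigma_pi_rename:
  "sigma k f \<Longrightarrow> sigma k (rename r f)" "pi k f \<Longrightarrow> pi k (rename r f)"
  by (induct arbitrary: r and r rule: sigma_pi.inducts) (auto intro: sigma_pi.intros)

lemma sigma_pi_Suc:
  "sigma k f \<Longrightarrow> sigma (Suc k) f" "pi k f \<Longrightarrow> pi (Suc k) f"
  by (induct rule: sigma_pi.inducts) (auto intro: sigma_pi.intros)

lemma delta0_sigma: "delta0 f \<Longrightarrow> sigma k f" and delta0_pi: "delta0 f \<Longrightarrow> pi k f"
proof -
  assume "delta0 f"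
  then have "sigma k f \<and> pi k f" by (induct k) (auto intro: sigma_pi.intros)
  then show "sigma k f" "pi k f" by simp_all
qed

lemma sigma_pi_Ex_inv: "sigma k f \<Longrightarrow> f = Ex g \<Longrightarrow> sigma k g \<and> 0 < k"
  "pi k f \<Longrightarrow> f = Ex g \<Longrightarrow> sigma k g \<and> 0 < k"
  by (induct arbitrary: g and g rule: sigma_pi.inducts) (auto intro: sigma_pi_Suc)

lemma sigma_pi_All_inv: "sigma k f \<Longrightarrow> f = All g \<Longrightarrow> pi k g \<and> 0 < k"
  "pi k f \<Longrightarrow> f = All g \<Longrightarrow> pi k g \<and> 0 < k"
  by (induct arbitrary: g and g rule: sigma_pi.inducts) (auto intro: sigma_pi_Suc)

lemma sigma_pi_unquantified_delta0:
  "sigma k f \<Longrightarrow> (\<forall>g. f \<noteq> Ex g \<and> f \<noteq> All g) \<Longrightarrow> delta0 f"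
  "pi k f \<Longrightarrow> (\<forall>g. f \<noteq> Ex g \<and> f \<noteq> All g) \<Longrightarrow> delta0 f"
  by (induct rule: sigma_pi.inducts) auto

lemma sigma_Ex_iff [simp]: "sigma k (Ex g) \<longleftrightarrow> 0 < k \<and> sigma k g"
  using sigma_pi_Ex_inv(1) by (cases k) (auto intro: sigma_pi.intros)

lemma pi_All_iff [simp]: "pi k (All g) \<longleftrightarrow> 0 < k \<and> pi k g"
  using sigma_pi_All_inv(2) by (cases k) (auto intro: sigma_pi.intros)

lemma sigma_All_iff [simp]: "sigma k (All g) \<longleftrightarrow> (\<exists>k'. k = Suc k' \<and> pi k' (All g))"
  using sigma_pi_All_inv(1)[of k "All g" g]
  by (cases k) (auto elim: sigma.cases intro: sigma_pi.intros)

lemma pi_Ex_iff [simp]: "pi k (Ex g) \<longleftrightarrow> (\<exists>k'. k = Suc k' \<and> sigma k' (Ex g))"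
  using sigma_pi_Ex_inv(2)[of k "Ex g" g]
  by (cases k) (auto elim: pi.cases intro: sigma_pi.intros)

fun dual :: "fm \<Rightarrow> fm" where
  "dual (Ex f) = All (dual f)"
| "dual (All f) = Ex (dual f)"
| "dual f = Neg f"

lemma sat_dual [simp]: "sat S e (dual f) = (\<not> sat S e f)"
  by (induct f arbitrary: e rule: dual.induct) auto

lemma dual_sigma_pi: "sigma k f \<Longrightarrow> pi k (dual f)" "pi k f \<Longrightarrow> sigma k (dual f)"
proof (induct rule: sigma_pi.inducts)
  case (s0 f) then show ?case by (cases f) (auto intro: sigma_pi.intros)
next
  case (p0 f) then show ?case by (cases f) (auto intro: sigma_pi.intros)
qed (auto intro: sigma_pi.intros)

lemma sigma_pi_unquantified_iff:
  "(\<forall>g. f \<noteq> Ex g \<and> f \<noteq> All g) \<Longrightarrow> sigma k f \<longleftrightarrow> delta0 f"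
  "(\<forall>g. f \<noteq> Ex g \<and> f \<noteq> All g) \<Longrightarrow> pi k f \<longleftrightarrow> delta0 f"
  using sigma_pi_unquantified_delta0 delta0_sigma delta0_pi by blast+

fun isEx :: "fm \<Rightarrow> bool" where "isEx (Ex f) = True" | "isEx f = False"
fun isAll :: "fm \<Rightarrow> bool" where "isAll (All f) = True" | "isAll f = False"
fun unq :: "fm \<Rightarrow> fm" where "unq (Ex f) = f" | "unq (All f) = f" | "unq f = f"

lemma isEx_iff: "isEx f \<longleftrightarrow> (\<exists>g. f = Ex g)" by (cases f) auto
lemma isAll_iff: "isAll f \<longleftrightarrow> (\<exists>g. f = All g)" by (cases f) auto

text \<open>The flag says which kind of quantifier is pulled out first: existentials keep a conjunction of
  \<open>\<Sigma>\<^sub>k\<close> formulas in \<open>\<Sigma>\<^sub>k\<close>, universals keep one of \<open>\<Pi>\<^sub>k\<close> formulas in \<open>\<Pi>\<^sub>k\<close>.\<close>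
function prenex_conj :: "bool \<Rightarrow> fm \<Rightarrow> fm \<Rightarrow> fm" where
  "prenex_conj m a b = (if m then
     (if isEx a then Ex (prenex_conj True (unq a) (lift b))
      else if isEx b then Ex (prenex_conj True (lift a) (unq b))
      else if isAll a then All (prenex_conj False (unq a) (lift b))
      else if isAll b then All (prenex_conj False (lift a) (unq b))
      else Conj a b)
   else
     (if isAll a then All (prenex_conj False (unq a) (lift b))
      else if isAll b then All (prenex_conj False (lift a) (unq b))
      else if isEx a then Ex (prenex_conj True (unq a) (lift b))
      else if isEx b then Ex (prenex_conj True (lift a) (unq b))
      else Conj a b))"
  by pat_completeness auto
termination by (relation "measure (\<lambda>(m,a,b). size a + size b)") (auto elim!: isEx.elims isAll.elims)

declare prenex_conj.simps [simp del]

lemma sat_prenex_conj [simp]: "univ S \<noteq> {} \<Longrightarrow> sat S e (prenex_conj m a b) = (sat S e a \<and> sat S e b)"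
  by (induct m a b arbitrary: e rule: prenex_conj.induct)
    (subst prenex_conj.simps, auto simp: isEx_iff isAll_iff)

lemma prenex_conj_sigma_pi: "(m \<longrightarrow> sigma k a \<longrightarrow> sigma k b \<longrightarrow> sigma k (prenex_conj m a b)) \<and>
    (\<not> m \<longrightarrow> pi k a \<longrightarrow> pi k b \<longrightarrow> pi k (prenex_conj m a b))"
proof (induct m a b arbitrary: k rule: prenex_conj.induct)
  case (1 m a b)
  show ?case
    unfolding prenex_conj.simps[of m a b]
    using 1 by (auto simp: isEx_iff isAll_iff sigma_pi_rename sigma_pi_unquantified_iff)
qed

lemma prenex_conj_sigma: "sigma k a \<Longrightarrow> sigma k b \<Longrightarrow> sigma k (prenex_conj True a b)"
  and prenex_conj_pi: "pi k a \<Longrightarrow> pi k b \<Longrightarrow> pi k (prenex_conj False a b)"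
  using prenex_conj_sigma_pi[of True k a b] prenex_conj_sigma_pi[of False k a b] by simp_all

definition prenex_disj :: "fm \<Rightarrow> fm \<Rightarrow> fm" where
  "prenex_disj a b = dual (prenex_conj True (dual a) (dual b))"

lemma sat_prenex_disj [simp]: "univ S \<noteq> {} \<Longrightarrow> sat S e (prenex_disj a b) = (sat S e a \<or> sat S e b)"
  by (simp add: prenex_disj_def)

lemma prenex_disj_pi: "pi k a \<Longrightarrow> pi k b \<Longrightarrow> pi k (prenex_disj a b)"
  by (auto simp: prenex_disj_def intro!: dual_sigma_pi prenex_conj_sigma)

fun prepend :: "'a list \<Rightarrow> (nat \<Rightarrow> 'a) \<Rightarrow> nat \<Rightarrow> 'a" where
  "prepend [] e = e"
| "prepend (u # us) e = u ## prepend us e"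

lemma prepend_snoc: "prepend (us @ [x]) e = prepend us (x ## e)"
  by (induct us) auto

lemma prepend_nth: "i < length us \<Longrightarrow> prepend us e i = us ! i"
proof (induct us arbitrary: i)
  case (Cons u us) then show ?case by (cases i) auto
qed simp

lemma prepend_beyond [simp]: "prepend us e (length us + i) = e i"
  by (induct us) auto

lemma prepend_length [simp]: "prepend us e (length us) = e 0"
  using prepend_beyond[of us e 0] by simp

definition bounded_tuple :: "'a struc \<Rightarrow> nat \<Rightarrow> 'a \<Rightarrow> 'a list \<Rightarrow> bool" where
  "bounded_tuple S j G us \<longleftrightarrow> length us = j \<and> set us \<subseteq> univ S \<and> (\<forall>u\<in>set us. ls S u G)"

lemma bounded_tuple_nth: "bounded_tuple S j G us \<Longrightarrow> i < j \<Longrightarrow> us ! i \<in> univ S"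
  unfolding bounded_tuple_def by (metis nth_mem subsetD)

fun alls :: "nat \<Rightarrow> fm \<Rightarrow> fm" where
  "alls 0 f = f"
| "alls (Suc m) f = alls m (All f)"

lemma alls_All: "alls m (All f) = All (alls m f)"
  by (induct m arbitrary: f) auto

lemma sat_alls: "sat S e (alls m f) \<longleftrightarrow>
  (\<forall>us. length us = m \<longrightarrow> set us \<subseteq> univ S \<longrightarrow> sat S (prepend us e) f)"
proof (induct m arbitrary: f)
  case (Suc m)
  show ?case
  proof
    assume "sat S e (alls (Suc m) f)"
    then show "\<forall>us. length us = Suc m \<longrightarrow> set us \<subseteq> univ S \<longrightarrow> sat S (prepend us e) f"
      using Suc by (auto simp: length_Suc_conv)
  next
    assume H: "\<forall>us. length us = Suc m \<longrightarrow> set us \<subseteq> univ S \<longrightarrow> sat S (prepend us e) f"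
    show "sat S e (alls (Suc m) f)"
      unfolding alls.simps Suc using H[rule_format, of "_ # _"] by auto
  qed
qed simp

lemma pi_Suc_imp_alls: "pi (Suc k) f \<Longrightarrow> \<exists>m g. f = alls m g \<and> sigma k g"
proof (induct f)
  case (All f)
  then obtain m g where "f = alls m g" "sigma k g" by auto
  then have "All f = alls (Suc m) g \<and> sigma k g" by (simp add: alls_All)
  then show ?case by blast
next
  case (Ex f)
  then show ?case by (intro exI[of _ 0] exI[of _ "Ex f"]) auto
qed (intro exI[of _ 0], simp add: sigma_pi_unquantified_iff)+

fun bexs :: "nat \<Rightarrow> nat \<Rightarrow> fm \<Rightarrow> fm" where
  "bexs 0 g f = f"
| "bexs (Suc m) g f = BEx (Var g) (bexs m (Suc g) f)"

lemma sat_bexs: "sat S e (bexs m g f) \<longleftrightarrow> (\<exists>us. bounded_tuple S m (e g) us \<and> sat S (prepend us e) f)"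
  unfolding bounded_tuple_def conj_assoc
proof (induct m arbitrary: g e)
  case (Suc m)
  show ?case
  proof
    assume "sat S e (bexs (Suc m) g f)"
    then obtain x us where "x \<in> univ S" "ls S x (e g)" "length us = m" "set us \<subseteq> univ S"
       "\<forall>u\<in>set us. ls S u (e g)" "sat S (prepend us (x ## e)) f"
      using Suc by auto
    then show "\<exists>us. length us = Suc m \<and> set us \<subseteq> univ S \<and> (\<forall>u\<in>set us. ls S u (e g)) \<and> sat S (prepend us e) f"
      by (intro exI[of _ "us @ [x]"]) (auto simp: prepend_snoc)
  next
    assume "\<exists>us. length us = Suc m \<and> set us \<subseteq> univ S \<and> (\<forall>u\<in>set us. ls S u (e g)) \<and> sat S (prepend us e) f"
    then obtain us where H: "length us = Suc m" "set us \<subseteq> univ S" "\<forall>u\<in>set us. ls S u (e g)"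
      "sat S (prepend us e) f"
      by blast
    then obtain vs x where us: "us = vs @ [x]" by (metis length_Suc_conv_rev)
    show "sat S e (bexs (Suc m) g f)"
      using H Suc[of "x ## e" "Suc g"] unfolding us by (auto simp: prepend_snoc)
  qed
qed simp

lemma delta0_bexs [simp]: "delta0 (bexs m g f) = delta0 f"
  by (induct m arbitrary: g) auto

text \<open>On a \<open>\<Delta>\<^sub>0\<close> body the bounded quantifier is kept, so that the result is \<open>\<Delta>\<^sub>0\<close>; otherwise it
  becomes an unbounded one, so that \<open>\<Pi>\<^sub>k\<close> bodies give \<open>\<Pi>\<^sub>k\<close> formulas.\<close>
definition ball :: "trm \<Rightarrow> fm \<Rightarrow> fm" where
  "ball t f = (if delta0 f then BAll t f else All (prenex_disj (Neg (Lt (Var 0) (rename_trm Suc t))) f))"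

lemma sat_ball: "univ S \<noteq> {} \<Longrightarrow>
    sat S e (ball t f) \<longleftrightarrow> (\<forall>x\<in>univ S. ls S x (evt S e t) \<longrightarrow> sat S (x ## e) f)"
  by (simp add: ball_def)

lemma pi_ball: "pi k f \<Longrightarrow> pi k (ball t f)"
proof (cases "delta0 f")
  case True
  then show ?thesis by (simp add: ball_def delta0_pi)
next
  case False
  assume f: "pi k f"
  then have "k \<noteq> 0" using False by (auto elim: pi.cases)
  moreover have "pi k (prenex_disj (Neg (Lt (Var 0) (rename_trm Suc t))) f)"
    using f by (intro prenex_disj_pi) (simp_all add: delta0_pi)
  ultimately show ?thesis using False by (simp add: ball_def)
qed

fun balls :: "nat \<Rightarrow> nat \<Rightarrow> fm \<Rightarrow> fm" where
  "balls 0 g f = f"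
| "balls (Suc m) g f = ball (Var g) (balls m (Suc g) f)"

lemma sat_balls: "univ S \<noteq> {} \<Longrightarrow>
    sat S e (balls m g f) \<longleftrightarrow> (\<forall>us. bounded_tuple S m (e g) us \<longrightarrow> sat S (prepend us e) f)"
  unfolding bounded_tuple_def imp_conjL
proof (induct m arbitrary: g e)
  case (Suc m)
  show ?case
  proof
    assume A: "sat S e (balls (Suc m) g f)"
    show "\<forall>us. length us = Suc m \<longrightarrow> set us \<subseteq> univ S \<longrightarrow> (\<forall>u\<in>set us. ls S u (e g)) \<longrightarrow>
        sat S (prepend us e) f"
    proof (intro allI impI)
      fix us assume H: "length us = Suc m" "set us \<subseteq> univ S" "\<forall>u\<in>set us. ls S u (e g)"
      then obtain vs x where us: "us = vs @ [x]" by (metis length_Suc_conv_rev)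
      show "sat S (prepend us e) f"
        using A H Suc.hyps[OF Suc.prems, of "x ## e" "Suc g"] Suc.prems unfolding us
        by (auto simp: prepend_snoc sat_ball)
    qed
  next
    assume "\<forall>us. length us = Suc m \<longrightarrow> set us \<subseteq> univ S \<longrightarrow> (\<forall>u\<in>set us. ls S u (e g)) \<longrightarrow>
        sat S (prepend us e) f"
    then show "sat S e (balls (Suc m) g f)"
      using Suc by (auto simp: sat_ball prepend_snoc[symmetric])
  qed
qed simp

lemma pi_balls: "pi k f \<Longrightarrow> pi k (balls m g f)"
  by (induct m arbitrary: g) (auto intro: pi_ball)

fun num_trm :: "nat \<Rightarrow> trm" where
  "num_trm 0 = Zero"
| "num_trm (Suc n) = Plus (num_trm n) One"

fun numv :: "'a struc \<Rightarrow> nat \<Rightarrow> 'a" where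
  "numv S 0 = zer S"
| "numv S (Suc n) = pl S (numv S n) (one S)"

lemma evt_num_trm [simp]: "evt S e (num_trm n) = numv S n"
  by (induct n) auto

fun conjs :: "fm list \<Rightarrow> fm" where
  "conjs [] = Eq Zero Zero"
| "conjs (f # fs) = Conj f (conjs fs)"

lemma sat_conjs [simp]: "sat S e (conjs fs) = (\<forall>f\<in>set fs. sat S e f)"
  by (induct fs) auto

lemma delta0_conjs [simp]: "delta0 (conjs fs) = (\<forall>f\<in>set fs. delta0 f)"
  by (induct fs) auto

locale pa_model =
  fixes S :: "'a struc"
  assumes PA: "PA_minus S"
begin

abbreviation U where "U \<equiv> univ S"
abbreviation padd (infixl "\<oplus>" 65) where "x \<oplus> y \<equiv> pl S x y"
abbreviation pmult (infixl "\<otimes>" 70) where "x \<otimes> y \<equiv> tm S x y"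
abbreviation pless (infix "\<prec>" 50) where "x \<prec> y \<equiv> ls S x y"
abbreviation pleq (infix "\<preceq>" 50) where "x \<preceq> y \<equiv> ls S x y \<or> x = y"
abbreviation pzero ("\<zero>") where "\<zero> \<equiv> zer S"
abbreviation pone ("\<one>") where "\<one> \<equiv> one S"

lemma zero_closed[simp]: "\<zero> \<in> U" and one_closed[simp]: "\<one> \<in> U"
  using PA by (auto simp: PA_minus_def wf_struc_def)

lemma add_closed[simp]: "x \<in> U \<Longrightarrow> y \<in> U \<Longrightarrow> x \<oplus> y \<in> U"
  and mult_closed[simp]: "x \<in> U \<Longrightarrow> y \<in> U \<Longrightarrow> x \<otimes> y \<in> U"
  using PA by (auto simp: PA_minus_def wf_struc_def)

lemma PA_axioms:
  "(\<forall>x\<in>U. \<forall>y\<in>U. \<forall>w\<in>U. (x \<oplus> y) \<oplus> w = x \<oplus> (y \<oplus> w) \<and> (x \<otimes> y) \<otimes> w = x \<otimes> (y \<otimes> w) \<and>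
     x \<otimes> (y \<oplus> w) = (x \<otimes> y) \<oplus> (x \<otimes> w))"
  "(\<forall>x\<in>U. \<forall>y\<in>U. x \<oplus> y = y \<oplus> x \<and> x \<otimes> y = y \<otimes> x)"
  "(\<forall>x\<in>U. x \<oplus> \<zero> = x \<and> x \<otimes> \<zero> = \<zero> \<and> x \<otimes> \<one> = x)"
  "(\<forall>x\<in>U. \<forall>y\<in>U. \<forall>w\<in>U. x \<prec> y \<and> y \<prec> w \<longrightarrow> x \<prec> w)"
  "(\<forall>x\<in>U. \<not> x \<prec> x)"
  "(\<forall>x\<in>U. \<forall>y\<in>U. x \<prec> y \<or> x = y \<or> y \<prec> x)"
  "(\<forall>x\<in>U. \<forall>y\<in>U. \<forall>w\<in>U. x \<prec> y \<longrightarrow> x \<oplus> w \<prec> y \<oplus> w)"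
  "(\<forall>x\<in>U. \<forall>y\<in>U. \<forall>w\<in>U. \<zero> \<prec> w \<and> x \<prec> y \<longrightarrow> x \<otimes> w \<prec> y \<otimes> w)"
  "(\<forall>x\<in>U. \<forall>y\<in>U. x \<prec> y \<longrightarrow> (\<exists>w\<in>U. x \<oplus> w = y))"
  "\<zero> \<prec> \<one>"
  "(\<forall>x\<in>U. \<zero> \<prec> x \<longrightarrow> (\<one> = x \<or> \<one> \<prec> x))"
  "(\<forall>x\<in>U. \<zero> = x \<or> \<zero> \<prec> x)"
  by (insert PA, unfold PA_minus_def Let_def, elim conjE, assumption)+

lemma add_assoc: "x \<in> U \<Longrightarrow> y \<in> U \<Longrightarrow> w \<in> U \<Longrightarrow> (x \<oplus> y) \<oplus> w = x \<oplus> (y \<oplus> w)"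
  using PA_axioms(1) by blast

lemma mult_assoc: "x \<in> U \<Longrightarrow> y \<in> U \<Longrightarrow> w \<in> U \<Longrightarrow> (x \<otimes> y) \<otimes> w = x \<otimes> (y \<otimes> w)"
  using PA_axioms(1) by blast

lemma distrib_left: "x \<in> U \<Longrightarrow> y \<in> U \<Longrightarrow> w \<in> U \<Longrightarrow> x \<otimes> (y \<oplus> w) = (x \<otimes> y) \<oplus> (x \<otimes> w)"
  using PA_axioms(1) by blast

lemma add_commute: "x \<in> U \<Longrightarrow> y \<in> U \<Longrightarrow> x \<oplus> y = y \<oplus> x"
  using PA_axioms(2) by blast

lemma mult_commute: "x \<in> U \<Longrightarrow> y \<in> U \<Longrightarrow> x \<otimes> y = y \<otimes> x"
  using PA_axioms(2) by blast

lemma add_zero: "x \<in> U \<Longrightarrow> x \<oplus> \<zero> = x"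
  using PA_axioms(3) by blast

lemma mult_zero: "x \<in> U \<Longrightarrow> x \<otimes> \<zero> = \<zero>"
  using PA_axioms(3) by blast

lemma mult_one: "x \<in> U \<Longrightarrow> x \<otimes> \<one> = x"
  using PA_axioms(3) by blast

lemma lt_trans: "x \<in> U \<Longrightarrow> y \<in> U \<Longrightarrow> w \<in> U \<Longrightarrow> x \<prec> y \<Longrightarrow> y \<prec> w \<Longrightarrow> x \<prec> w"
  using PA_axioms(4) by blast

lemma lt_irrefl: "x \<in> U \<Longrightarrow> \<not> x \<prec> x"
  using PA_axioms(5) by blast

lemma lt_linear: "x \<in> U \<Longrightarrow> y \<in> U \<Longrightarrow> x \<prec> y \<or> x = y \<or> y \<prec> x"
  using PA_axioms(6) by blast

lemma add_lt_mono: "x \<in> U \<Longrightarrow> y \<in> U \<Longrightarrow> w \<in> U \<Longrightarrow> x \<prec> y \<Longrightarrow> x \<oplus> w \<prec> y \<oplus> w"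
  using PA_axioms(7) by blast

lemma mult_lt_mono: "x \<in> U \<Longrightarrow> y \<in> U \<Longrightarrow> w \<in> U \<Longrightarrow> \<zero> \<prec> w \<Longrightarrow> x \<prec> y \<Longrightarrow> x \<otimes> w \<prec> y \<otimes> w"
  using PA_axioms(8) by blast

lemma lt_imp_add: "x \<in> U \<Longrightarrow> y \<in> U \<Longrightarrow> x \<prec> y \<Longrightarrow> \<exists>w\<in>U. x \<oplus> w = y"
  using PA_axioms(9) by blast

lemma zero_lt_one: "\<zero> \<prec> \<one>"
  using PA_axioms(10) by blast

lemma one_le_pos: "x \<in> U \<Longrightarrow> \<zero> \<prec> x \<Longrightarrow> \<one> = x \<or> \<one> \<prec> x"
  using PA_axioms(11) by blast

lemma zero_le: "x \<in> U \<Longrightarrow> \<zero> = x \<or> \<zero> \<prec> x"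
  using PA_axioms(12) by blast

lemma zero_add: "x \<in> U \<Longrightarrow> \<zero> \<oplus> x = x" by (simp add: add_commute add_zero)

lemma zero_mult: "x \<in> U \<Longrightarrow> \<zero> \<otimes> x = \<zero>" by (simp add: mult_commute mult_zero)

lemma one_mult: "x \<in> U \<Longrightarrow> \<one> \<otimes> x = x" by (simp add: mult_commute mult_one)

lemma distrib_right: "x \<in> U \<Longrightarrow> y \<in> U \<Longrightarrow> w \<in> U \<Longrightarrow> (y \<oplus> w) \<otimes> x = (y \<otimes> x) \<oplus> (w \<otimes> x)"
  by (simp add: mult_commute distrib_left)

lemma add_left_commute: "x \<in> U \<Longrightarrow> y \<in> U \<Longrightarrow> w \<in> U \<Longrightarrow> x \<oplus> (y \<oplus> w) = y \<oplus> (x \<oplus> w)"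
proof -
  assume a: "x \<in> U" "y \<in> U" "w \<in> U"
  have "x \<oplus> (y \<oplus> w) = (x \<oplus> y) \<oplus> w" using a by (simp add: add_assoc)
  also have "\<dots> = (y \<oplus> x) \<oplus> w" using a by (simp add: add_commute)
  also have "\<dots> = y \<oplus> (x \<oplus> w)" using a by (simp add: add_assoc)
  finally show ?thesis .
qed

lemma mult_left_commute: "x \<in> U \<Longrightarrow> y \<in> U \<Longrightarrow> w \<in> U \<Longrightarrow> x \<otimes> (y \<otimes> w) = y \<otimes> (x \<otimes> w)"
proof -
  assume a: "x \<in> U" "y \<in> U" "w \<in> U"
  have "x \<otimes> (y \<otimes> w) = (x \<otimes> y) \<otimes> w" using a by (simp add: mult_assoc)
  also have "\<dots> = (y \<otimes> x) \<otimes> w" using a by (simp add: mult_commute)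
  also have "\<dots> = y \<otimes> (x \<otimes> w)" using a by (simp add: mult_assoc)
  finally show ?thesis .
qed

lemmas add_mult_ac = add_assoc add_commute add_left_commute mult_assoc mult_commute mult_left_commute

lemma add_lt_mono_left: "x \<in> U \<Longrightarrow> y \<in> U \<Longrightarrow> w \<in> U \<Longrightarrow> x \<prec> y \<Longrightarrow> w \<oplus> x \<prec> w \<oplus> y"
  using add_lt_mono[of x y w] by (simp add: add_commute)

lemma lt_asym: "x \<in> U \<Longrightarrow> y \<in> U \<Longrightarrow> x \<prec> y \<Longrightarrow> \<not> y \<prec> x"
  using lt_irrefl lt_trans by blast

lemma add_right_cancel: "x \<in> U \<Longrightarrow> y \<in> U \<Longrightarrow> w \<in> U \<Longrightarrow> x \<oplus> w = y \<oplus> w \<Longrightarrow> x = y"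
  using lt_linear[of x y] add_lt_mono[of x y w] add_lt_mono[of y x w] lt_irrefl[of "x \<oplus> w"] by auto

lemma add_left_cancel: "x \<in> U \<Longrightarrow> y \<in> U \<Longrightarrow> w \<in> U \<Longrightarrow> w \<oplus> x = w \<oplus> y \<Longrightarrow> x = y"
  using add_right_cancel[of x y w] by (simp add: add_commute)

lemma add_le_mono: "x \<in> U \<Longrightarrow> y \<in> U \<Longrightarrow> w \<in> U \<Longrightarrow> x \<preceq> y \<Longrightarrow> x \<oplus> w \<preceq> y \<oplus> w"
  using add_lt_mono by blast

lemma add_le_mono_left: "x \<in> U \<Longrightarrow> y \<in> U \<Longrightarrow> w \<in> U \<Longrightarrow> x \<preceq> y \<Longrightarrow> w \<oplus> x \<preceq> w \<oplus> y"
  using add_lt_mono_left by blast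

lemma le_add: "x \<in> U \<Longrightarrow> y \<in> U \<Longrightarrow> x \<preceq> x \<oplus> y"
  using zero_le[of y] add_lt_mono_left[of "\<zero>" y x] by (auto simp: add_zero)

lemma lt_add_pos: "x \<in> U \<Longrightarrow> y \<in> U \<Longrightarrow> \<zero> \<prec> y \<Longrightarrow> x \<prec> x \<oplus> y"
  using add_lt_mono_left[of "\<zero>" y x] by (auto simp: add_zero)

lemma lt_add_one: "x \<in> U \<Longrightarrow> x \<prec> x \<oplus> \<one>"
  by (simp add: lt_add_pos zero_lt_one)

lemma le_lt_trans: "x \<in> U \<Longrightarrow> y \<in> U \<Longrightarrow> w \<in> U \<Longrightarrow> x \<preceq> y \<Longrightarrow> y \<prec> w \<Longrightarrow> x \<prec> w"
  using lt_trans by blast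

lemma lt_le_trans: "x \<in> U \<Longrightarrow> y \<in> U \<Longrightarrow> w \<in> U \<Longrightarrow> x \<prec> y \<Longrightarrow> y \<preceq> w \<Longrightarrow> x \<prec> w"
  using lt_trans by blast

lemma le_trans: "x \<in> U \<Longrightarrow> y \<in> U \<Longrightarrow> w \<in> U \<Longrightarrow> x \<preceq> y \<Longrightarrow> y \<preceq> w \<Longrightarrow> x \<preceq> w"
  using lt_trans by blast

lemma not_lt: "x \<in> U \<Longrightarrow> y \<in> U \<Longrightarrow> \<not> x \<prec> y \<longleftrightarrow> y \<preceq> x"
  using lt_asym[of x y] lt_irrefl[of x] lt_linear[of x y] by auto

lemma lt_iff_add_one_le: "x \<in> U \<Longrightarrow> y \<in> U \<Longrightarrow> x \<prec> y \<longleftrightarrow> x \<oplus> \<one> \<preceq> y"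
proof
  assume x: "x \<in> U" and y: "y \<in> U" and "x \<prec> y"
  then obtain w where w: "w \<in> U" "x \<oplus> w = y" using lt_imp_add by blast
  have "w \<noteq> \<zero>" using w x \<open>x \<prec> y\<close> add_zero lt_irrefl by auto
  then have "\<zero> \<prec> w" using zero_le w by auto
  then have "\<one> \<preceq> w" using one_le_pos w by auto
  then show "x \<oplus> \<one> \<preceq> y" using w x add_le_mono_left[of "\<one>" w x] by simp
next
  assume x: "x \<in> U" and y: "y \<in> U" and "x \<oplus> \<one> \<preceq> y"
  then show "x \<prec> y" using lt_add_one[of x] lt_le_trans[of x "x \<oplus> \<one>" y] by simp
qed

lemma lt_add_one_iff: "x \<in> U \<Longrightarrow> y \<in> U \<Longrightarrow> x \<prec> y \<oplus> \<one> \<longleftrightarrow> x \<preceq> y"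
proof -
  assume x: "x \<in> U" and y: "y \<in> U"
  have "x \<prec> y \<oplus> \<one> \<longleftrightarrow> \<not> (y \<oplus> \<one> \<preceq> x)" using not_lt[of x "y \<oplus> \<one>"] x y by auto
  also have "\<dots> \<longleftrightarrow> \<not> y \<prec> x" using lt_iff_add_one_le[of y x] x y by simp
  also have "\<dots> \<longleftrightarrow> x \<preceq> y" using not_lt[of y x] x y by simp
  finally show ?thesis .
qed

lemma le_imp_add: "x \<in> U \<Longrightarrow> y \<in> U \<Longrightarrow> x \<preceq> y \<Longrightarrow> \<exists>w\<in>U. x \<oplus> w = y"
  using lt_imp_add add_zero zero_closed by blast

lemma mult_le_mono: "x \<in> U \<Longrightarrow> y \<in> U \<Longrightarrow> w \<in> U \<Longrightarrow> x \<preceq> y \<Longrightarrow> x \<otimes> w \<preceq> y \<otimes> w"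
  using zero_le[of w] mult_lt_mono[of x y w] by (auto simp: mult_zero)

lemma mult_le_mono_left: "x \<in> U \<Longrightarrow> y \<in> U \<Longrightarrow> w \<in> U \<Longrightarrow> x \<preceq> y \<Longrightarrow> w \<otimes> x \<preceq> w \<otimes> y"
  using mult_le_mono[of x y w] by (simp add: mult_commute)

lemma mult_lt_cancel: "x \<in> U \<Longrightarrow> y \<in> U \<Longrightarrow> w \<in> U \<Longrightarrow> x \<otimes> w \<prec> y \<otimes> w \<Longrightarrow> x \<prec> y"
  using mult_le_mono[of y x w] not_lt[of x y] not_lt[of "x \<otimes> w" "y \<otimes> w"] by auto

lemma pos_imp_one_le: "x \<in> U \<Longrightarrow> \<zero> \<prec> x \<Longrightarrow> \<one> \<preceq> x"
  using one_le_pos by auto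

lemma le_mult_pos: "x \<in> U \<Longrightarrow> w \<in> U \<Longrightarrow> \<zero> \<prec> w \<Longrightarrow> x \<preceq> x \<otimes> w"
  using mult_le_mono_left[of "\<one>" w x] pos_imp_one_le[of w] by (auto simp: mult_one)

lemma pos_of_gt: "x \<in> U \<Longrightarrow> y \<in> U \<Longrightarrow> x \<prec> y \<Longrightarrow> \<zero> \<prec> y"
  using zero_le[of x] lt_trans[of "\<zero>" x y] by auto

lemma division_unique:
  assumes "q \<in> U" "r \<in> U" "q' \<in> U" "r' \<in> U" "d \<in> U" "r \<prec> d" "r' \<prec> d"
    "q \<otimes> d \<oplus> r = q' \<otimes> d \<oplus> r'"
  shows "q = q' \<and> r = r'"
proof -
  have c: False if A: "a \<in> U" "b \<in> U" "s \<in> U" "t \<in> U" "s \<prec> d" "a \<prec> b" "a \<otimes> d \<oplus> s = b \<otimes> d \<oplus> t" for a b s t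
  proof -
    have "a \<oplus> \<one> \<preceq> b" using A lt_iff_add_one_le by simp
    then have "(a \<oplus> \<one>) \<otimes> d \<preceq> b \<otimes> d" using A assms mult_le_mono by simp
    then have "a \<otimes> d \<oplus> d \<preceq> b \<otimes> d" using A assms by (simp add: distrib_right one_mult)
    moreover have "b \<otimes> d \<preceq> b \<otimes> d \<oplus> t" using A assms le_add by simp
    moreover have "a \<otimes> d \<oplus> s \<prec> a \<otimes> d \<oplus> d" using A assms add_lt_mono_left[of s d "a \<otimes> d"] by simp
    ultimately have "a \<otimes> d \<oplus> s \<prec> b \<otimes> d \<oplus> t" using A assms
      lt_le_trans[of "a \<otimes> d \<oplus> s" "a \<otimes> d \<oplus> d" "b \<otimes> d"] lt_le_trans[of "a \<otimes> d \<oplus> s" "b \<otimes> d" "b \<otimes> d \<oplus> t"]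
      by simp
    then show False using A lt_irrefl[of "b \<otimes> d \<oplus> t"] assms by simp
  qed
  have "q = q'"
    using lt_linear[of q q'] c[of q q' r r'] c[of q' q r' r] assms by auto
  then show ?thesis using assms add_left_cancel by (metis mult_closed)
qed

definition is_odd :: "'a \<Rightarrow> bool" where "is_odd q = (\<exists>h\<in>U. q = h \<oplus> h \<oplus> \<one>)"

lemma double_ne_odd: "h \<in> U \<Longrightarrow> h' \<in> U \<Longrightarrow> h \<oplus> h \<noteq> h' \<oplus> h' \<oplus> \<one>"
proof
  assume h: "h \<in> U" "h' \<in> U" and eq: "h \<oplus> h = h' \<oplus> h' \<oplus> \<one>"
  consider "h \<preceq> h'" | "h' \<prec> h" using lt_linear h by blast
  then show False
  proof cases
    case 1
    then have "h \<oplus> h \<preceq> h' \<oplus> h'"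
      using h add_le_mono add_le_mono_left le_trans[of "h \<oplus> h" "h' \<oplus> h" "h' \<oplus> h'"] by simp
    then show False using eq h lt_add_one[of "h' \<oplus> h'"] lt_asym by (metis add_closed)
  next
    case 2
    then have "h' \<oplus> \<one> \<preceq> h" using h lt_iff_add_one_le by simp
    then have "(h' \<oplus> \<one>) \<oplus> (h' \<oplus> \<one>) \<preceq> h \<oplus> h" using h add_le_mono add_le_mono_left
        le_trans[of "(h' \<oplus> \<one>) \<oplus> (h' \<oplus> \<one>)" "h \<oplus> (h' \<oplus> \<one>)" "h \<oplus> h"] by simp
    moreover have "(h' \<oplus> \<one>) \<oplus> (h' \<oplus> \<one>) = (h' \<oplus> h' \<oplus> \<one>) \<oplus> \<one>" using h by (simp add: add_mult_ac)
    ultimately show False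
      using eq h lt_add_one[of "h' \<oplus> h' \<oplus> \<one>"] lt_asym by (metis add_closed one_closed)
  qed
qed

lemma is_odd_pos: "q \<in> U \<Longrightarrow> is_odd q \<Longrightarrow> \<zero> \<prec> q"
  unfolding is_odd_def using lt_add_pos zero_le le_lt_trans
  by (metis add_closed zero_add lt_add_one one_closed zero_closed zero_lt_one)

lemma remainder_bound:
  assumes "r' \<in> U" "r \<in> U" "A \<in> U" "B \<in> U" "r' \<prec> B" "r \<prec> A"
  shows "r' \<otimes> A \<oplus> r \<prec> B \<otimes> A"
proof -
  have "r' \<oplus> \<one> \<preceq> B" using assms lt_iff_add_one_le by simp
  then have "(r' \<oplus> \<one>) \<otimes> A \<preceq> B \<otimes> A" using assms mult_le_mono by simp
  then have "r' \<otimes> A \<oplus> A \<preceq> B \<otimes> A" using assms by (simp add: distrib_right one_mult)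
  moreover have "r' \<otimes> A \<oplus> r \<prec> r' \<otimes> A \<oplus> A" using assms add_lt_mono_left by simp
  ultimately show ?thesis using assms lt_le_trans[of "r' \<otimes> A \<oplus> r" "r' \<otimes> A \<oplus> A" "B \<otimes> A"] by simp
qed

lemma numv_closed [simp]: "numv S n \<in> U"
  by (induct n) auto

lemma numv_lt: "i < j \<Longrightarrow> numv S i \<prec> numv S j"
proof (induct j)
  case (Suc j)
  have "numv S j \<prec> numv S (Suc j)" by (simp add: lt_add_one)
  then show ?case
    using Suc lt_trans[of "numv S i" "numv S j" "numv S (Suc j)"] less_Suc_eq by auto
qed simp

lemma numv_inj: "numv S i = numv S j \<Longrightarrow> i = j"
  using numv_lt[of i j] numv_lt[of j i] lt_irrefl[of "numv S j"] by (cases i j rule: linorder_cases) auto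

end

locale idelta0 = pa_model +
  assumes IDelta0: "IDelta0 S"
begin

lemma env_zero: "env S (\<lambda>_. \<zero>)"
  by (simp add: env_const)

lemma delta0_induct:
  assumes "delta0 f" "env S e" "sat S (\<zero> ## e) f"
    "\<And>x. x \<in> U \<Longrightarrow> sat S (x ## e) f \<Longrightarrow> sat S ((x \<oplus> \<one>) ## e) f" "x \<in> U"
  shows "sat S (x ## e) f"
  using IDelta0 assms unfolding IDelta0_def by blast

lemma division_exists: "d \<in> U \<Longrightarrow> \<zero> \<prec> d \<Longrightarrow> N \<in> U \<Longrightarrow> \<exists>q\<in>U. \<exists>r\<in>U. N = q \<otimes> d \<oplus> r \<and> r \<prec> d"
proof -
  assume d: "d \<in> U" "\<zero> \<prec> d" and N: "N \<in> U"
  define e where "e = d ## (\<lambda>_. \<zero>)"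
  have env: "env S e" using d unfolding e_def by (intro env_cons env_zero) auto
  define f where
    "f = BEx (Plus (Var 0) One) (BEx (Var 2) (Eq (Var 2) (Plus (Times (Var 1) (Var 3)) (Var 0))))"
  have df: "delta0 f" by (simp add: f_def)
  have sf: "sat S (v ## e) f \<longleftrightarrow> (\<exists>q\<in>U. q \<prec> v \<oplus> \<one> \<and> (\<exists>r\<in>U. r \<prec> d \<and> v = q \<otimes> d \<oplus> r))" for v
    by (simp add: f_def e_def)
  have "sat S (N ## e) f"
  proof (rule delta0_induct[OF df env _ _ N])
    show "sat S (\<zero> ## e) f" unfolding sf using d zero_lt_one
      by (intro bexI[of _ "\<zero>"]) (auto simp: zero_mult add_zero zero_add)
  next
    fix v assume v: "v \<in> U" and IH: "sat S (v ## e) f"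
    then obtain q r where qr: "q \<in> U" "q \<prec> v \<oplus> \<one>" "r \<in> U" "r \<prec> d" "v = q \<otimes> d \<oplus> r"
      using sf by blast
    have q1: "q \<oplus> \<one> \<prec> v \<oplus> \<one> \<oplus> \<one>" using qr v add_lt_mono by simp
    have q2: "q \<prec> v \<oplus> \<one> \<oplus> \<one>" using qr v lt_trans[of q "v \<oplus> \<one>" "v \<oplus> \<one> \<oplus> \<one>"] lt_add_one by simp
    show "sat S ((v \<oplus> \<one>) ## e) f" unfolding sf
    proof (cases "r \<oplus> \<one> = d")
      case True
      have eq: "v \<oplus> \<one> = (q \<oplus> \<one>) \<otimes> d \<oplus> \<zero>" using qr d True
        by (simp add: distrib_right one_mult add_zero add_assoc)
      show "\<exists>q\<in>U. q \<prec> v \<oplus> \<one> \<oplus> \<one> \<and> (\<exists>r\<in>U. r \<prec> d \<and> v \<oplus> \<one> = q \<otimes> d \<oplus> r)"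
      proof (rule bexI[of _ "q \<oplus> \<one>"])
        show "q \<oplus> \<one> \<prec> v \<oplus> \<one> \<oplus> \<one> \<and> (\<exists>r\<in>U. r \<prec> d \<and> v \<oplus> \<one> = (q \<oplus> \<one>) \<otimes> d \<oplus> r)"
          using q1 eq d zero_closed by blast
      qed (use qr in simp)
    next
      case False
      then have "r \<oplus> \<one> \<prec> d" using qr d lt_iff_add_one_le by auto
      moreover have "v \<oplus> \<one> = q \<otimes> d \<oplus> (r \<oplus> \<one>)" using qr d by (simp add: add_assoc)
      ultimately show "\<exists>q\<in>U. q \<prec> v \<oplus> \<one> \<oplus> \<one> \<and> (\<exists>r\<in>U. r \<prec> d \<and> v \<oplus> \<one> = q \<otimes> d \<oplus> r)"
        using q2 qr(1,3) d one_closed add_closed by blast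
    qed
  qed
  then show ?thesis using sf by blast
qed

lemma even_or_odd: "x \<in> U \<Longrightarrow> \<exists>h\<in>U. x = h \<oplus> h \<or> x = h \<oplus> h \<oplus> \<one>"
proof -
  assume x: "x \<in> U"
  define f where "f = BEx (Plus (Var 0) One)
    (Disj (Eq (Var 1) (Plus (Var 0) (Var 0))) (Eq (Var 1) (Plus (Plus (Var 0) (Var 0)) One)))"
  have df: "delta0 f" by (simp add: f_def)
  have sf: "sat S (v ## (\<lambda>_. \<zero>)) f \<longleftrightarrow> (\<exists>h\<in>U. h \<prec> v \<oplus> \<one> \<and> (v = h \<oplus> h \<or> v = h \<oplus> h \<oplus> \<one>))" for v
    by (simp add: f_def)
  have "sat S (x ## (\<lambda>_. \<zero>)) f"
  proof (rule delta0_induct[OF df env_zero _ _ x])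
    show "sat S (\<zero> ## (\<lambda>_. \<zero>)) f" unfolding sf using zero_lt_one
      by (intro bexI[of _ "\<zero>"]) (auto simp: add_zero zero_add)
  next
    fix v assume v: "v \<in> U" and IH: "sat S (v ## (\<lambda>_. \<zero>)) f"
    then obtain h where h: "h \<in> U" "h \<prec> v \<oplus> \<one>" "v = h \<oplus> h \<or> v = h \<oplus> h \<oplus> \<one>" using sf by blast
    have h1: "h \<oplus> \<one> \<prec> v \<oplus> \<one> \<oplus> \<one>" using h v add_lt_mono by simp
    have h2: "h \<prec> v \<oplus> \<one> \<oplus> \<one>" using h v lt_trans[of h "v \<oplus> \<one>" "v \<oplus> \<one> \<oplus> \<one>"] lt_add_one by simp
    show "sat S ((v \<oplus> \<one>) ## (\<lambda>_. \<zero>)) f" unfolding sf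
    proof (cases "v = h \<oplus> h")
      case True then show "\<exists>h\<in>U. h \<prec> v \<oplus> \<one> \<oplus> \<one> \<and> (v \<oplus> \<one> = h \<oplus> h \<or> v \<oplus> \<one> = h \<oplus> h \<oplus> \<one>)"
        using h2 h by auto
    next
      case False
      then have "v \<oplus> \<one> = (h \<oplus> \<one>) \<oplus> (h \<oplus> \<one>)" using h by (simp add: add_mult_ac)
      then show "\<exists>h\<in>U. h \<prec> v \<oplus> \<one> \<oplus> \<one> \<and> (v \<oplus> \<one> = h \<oplus> h \<or> v \<oplus> \<one> = h \<oplus> h \<oplus> \<one>)"
        using h1 h by (intro bexI[of _ "h \<oplus> \<one>"]) auto
    qed
  qed
  then show ?thesis using sf by blast
qed

lemma is_odd_double_add: "t \<in> U \<Longrightarrow> q \<in> U \<Longrightarrow> is_odd (t \<oplus> t \<oplus> q) \<longleftrightarrow> is_odd q"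
proof -
  assume t: "t \<in> U" and q: "q \<in> U"
  obtain s where s: "s \<in> U" "q = s \<oplus> s \<or> q = s \<oplus> s \<oplus> \<one>" using even_or_odd q by blast
  show ?thesis
  proof (cases "q = s \<oplus> s")
    case True
    have "t \<oplus> t \<oplus> q = (t \<oplus> s) \<oplus> (t \<oplus> s)" using True s t by (simp add: add_mult_ac)
    then show ?thesis using True s t double_ne_odd unfolding is_odd_def by (metis add_closed)
  next
    case False
    then have qq: "q = s \<oplus> s \<oplus> \<one>" using s by auto
    have "t \<oplus> t \<oplus> q = (t \<oplus> s) \<oplus> (t \<oplus> s) \<oplus> \<one>" using qq s t by (simp add: add_mult_ac)
    then show ?thesis using qq s t unfolding is_odd_def by (metis add_closed)
  qed
qed

end

section \<open>Exponentiation and binary digits\<close>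

definition defines_exp :: "'a struc \<Rightarrow> fm \<Rightarrow> bool" where
  "defines_exp S E \<longleftrightarrow> delta0 E \<and>
     (\<forall>e. env S e \<longrightarrow>
        sat S (zer S ## one S ## e) E \<and>
        (\<forall>x\<in>univ S. \<forall>y\<in>univ S. sat S (x ## y ## e) E \<longrightarrow> sat S (pl S x (one S) ## pl S y y ## e) E) \<and>
        (\<forall>x\<in>univ S. \<forall>y\<in>univ S. \<forall>y'\<in>univ S. sat S (x ## y ## e) E \<and> sat S (x ## y' ## e) E \<longrightarrow> y = y') \<and>
        (\<forall>x\<in>univ S. \<exists>y\<in>univ S. sat S (x ## y ## e) E))"

lemma exp_ax_iff_defines_exp: "exp_ax S \<longleftrightarrow> (\<exists>E. defines_exp S E)"
  by (simp add: exp_ax_def defines_exp_def)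

definition exp_fm :: "fm \<Rightarrow> trm \<Rightarrow> trm \<Rightarrow> fm" where
  "exp_fm E t1 t2 = subst (\<lambda>k. if k = 0 then t1 else if k = 1 then t2 else Zero) E"

lemma sat_exp_fm: "sat S e (exp_fm E t1 t2) \<longleftrightarrow> sat S (evt S e t1 ## evt S e t2 ## (\<lambda>_. zer S)) E"
proof -
  have "(\<lambda>i. evt S e (if i = 0 then t1 else if i = 1 then t2 else Zero)) =
      evt S e t1 ## evt S e t2 ## (\<lambda>_. zer S)"
    by (rule ext) (simp add: cons_env_def split: nat.split)
  then show ?thesis by (simp add: exp_fm_def)
qed

lemma delta0_exp_fm [simp]: "delta0 (exp_fm E t1 t2) = delta0 E"
  by (simp add: exp_fm_def)

text \<open>All witnesses are bounded by \<open>N\<close>, so that \<open>bit_fm\<close>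
  below is \<open>\<Delta>\<^sub>0\<close> relative to \<open>E\<close>.\<close>
definition bit_of :: "'a struc \<Rightarrow> fm \<Rightarrow> 'a \<Rightarrow> 'a \<Rightarrow> bool" where
  "bit_of S E k N \<longleftrightarrow> (\<exists>z\<in>univ S. ls S z (pl S N (one S)) \<and> sat S (k ## z ## (\<lambda>_. zer S)) E \<and>
     (\<exists>q\<in>univ S. ls S q (pl S N (one S)) \<and> (\<exists>r\<in>univ S. ls S r z \<and> N = pl S (tm S q z) r \<and>
       (\<exists>h\<in>univ S. ls S h (pl S N (one S)) \<and> q = pl S (pl S h h) (one S)))))"

definition bit_fm :: "fm \<Rightarrow> trm \<Rightarrow> trm \<Rightarrow> fm" where
  "bit_fm E k N =
    (let N1 = rename_trm Suc N; N3 = rename_trm Suc (rename_trm Suc N1) in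
     BEx (Plus N One) (Conj (exp_fm E (rename_trm Suc k) (Var 0))
       (BEx (Plus N1 One) (BEx (Var 1) (Conj (Eq N3 (Plus (Times (Var 1) (Var 2)) (Var 0)))
         (BEx (Plus N3 One) (Eq (Var 2) (Plus (Plus (Var 0) (Var 0)) One))))))))"

lemma sat_bit_fm [simp]: "sat S e (bit_fm E k N) \<longleftrightarrow> bit_of S E (evt S e k) (evt S e N)"
  by (simp add: bit_fm_def bit_of_def sat_exp_fm Let_def)

lemma delta0_bit_fm [simp]: "delta0 (bit_fm E k N) = delta0 E"
  by (simp add: bit_fm_def Let_def)

locale idelta0_exp = idelta0 S for S :: "'a struc" +
  fixes E :: fm
  assumes defines_exp: "defines_exp S E"
begin

lemma delta0_E: "delta0 E"
  using defines_exp by (simp add: defines_exp_def)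

definition exp_rel :: "'a \<Rightarrow> 'a \<Rightarrow> bool" where
  "exp_rel x y \<longleftrightarrow> sat S (x ## y ## (\<lambda>_. \<zero>)) E"

lemma exp_rel_zero: "exp_rel \<zero> \<one>"
  and exp_rel_Suc: "x \<in> U \<Longrightarrow> y \<in> U \<Longrightarrow> exp_rel x y \<Longrightarrow> exp_rel (x \<oplus> \<one>) (y \<oplus> y)"
  and exp_rel_unique: "x \<in> U \<Longrightarrow> y \<in> U \<Longrightarrow> y' \<in> U \<Longrightarrow> exp_rel x y \<Longrightarrow> exp_rel x y' \<Longrightarrow> y = y'"
  and exp_rel_total: "x \<in> U \<Longrightarrow> \<exists>y\<in>U. exp_rel x y"
  using defines_exp env_zero by (simp_all add: defines_exp_def exp_rel_def)

lemma sat_exp_fm_iff: "sat S e (exp_fm E t1 t2) \<longleftrightarrow> exp_rel (evt S e t1) (evt S e t2)"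
  by (simp add: sat_exp_fm exp_rel_def)

definition pow2 :: "'a \<Rightarrow> 'a" where
  "pow2 x = (THE y. y \<in> U \<and> exp_rel x y)"

lemma pow2_closed [simp]: "x \<in> U \<Longrightarrow> pow2 x \<in> U"
  and exp_rel_pow2: "x \<in> U \<Longrightarrow> exp_rel x (pow2 x)"
proof -
  assume x: "x \<in> U"
  obtain y where y: "y \<in> U" "exp_rel x y" using exp_rel_total[OF x] by blast
  have "\<exists>!y. y \<in> U \<and> exp_rel x y" using y exp_rel_unique[OF x] by blast
  then have "pow2 x \<in> U \<and> exp_rel x (pow2 x)" unfolding pow2_def by (rule theI')
  then show "pow2 x \<in> U" "exp_rel x (pow2 x)" by simp_all
qed

lemma exp_rel_iff: "x \<in> U \<Longrightarrow> y \<in> U \<Longrightarrow> exp_rel x y \<longleftrightarrow> y = pow2 x"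
  using exp_rel_unique exp_rel_pow2 pow2_closed by blast

lemma pow2_zero: "pow2 \<zero> = \<one>"
  using exp_rel_iff[of "\<zero>" "\<one>"] exp_rel_zero by simp

lemma pow2_Suc: "x \<in> U \<Longrightarrow> pow2 (x \<oplus> \<one>) = pow2 x \<oplus> pow2 x"
  using exp_rel_iff[of "x \<oplus> \<one>" "pow2 x \<oplus> pow2 x"] exp_rel_Suc[of x "pow2 x"] exp_rel_pow2 by simp

lemma lt_pow2: "x \<in> U \<Longrightarrow> x \<prec> pow2 x"
proof -
  assume x: "x \<in> U"
  define B where "B = pow2 x \<oplus> \<one>"
  have B: "B \<in> U" using x by (simp add: B_def)
  define f where "f = BAll (Var 1) (Disj (Neg (exp_fm E (Var 1) (Var 0))) (Lt (Var 1) (Var 0)))"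
  have df: "delta0 f" using delta0_E by (simp add: f_def)
  have sf: "sat S (v ## (\<lambda>_. B)) f \<longleftrightarrow> (\<forall>z\<in>U. z \<prec> B \<longrightarrow> exp_rel v z \<longrightarrow> v \<prec> z)" for v
    by (simp add: f_def sat_exp_fm_iff)
  have env: "env S (\<lambda>_. B)" using B by (simp add: env_def image_subset_iff)
  have "sat S (x ## (\<lambda>_. B)) f"
  proof (rule delta0_induct[OF df env _ _ x])
    show "sat S (\<zero> ## (\<lambda>_. B)) f" unfolding sf using exp_rel_iff pow2_zero zero_lt_one by auto
  next
    fix v assume v: "v \<in> U" and IH: "sat S (v ## (\<lambda>_. B)) f"
    show "sat S ((v \<oplus> \<one>) ## (\<lambda>_. B)) f" unfolding sf
    proof (intro ballI impI)
      fix z assume z: "z \<in> U" "z \<prec> B" "exp_rel (v \<oplus> \<one>) z"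
      then have zz: "z = pow2 v \<oplus> pow2 v" using exp_rel_iff pow2_Suc v by simp
      have "pow2 v \<preceq> z" using zz le_add v by simp
      then have "pow2 v \<prec> B" using z le_lt_trans[of "pow2 v" z B] v B by simp
      then have lt: "v \<prec> pow2 v" using IH sf v exp_rel_pow2 by auto
      then have "\<zero> \<prec> pow2 v" using zero_le[of v] v lt_trans[of "\<zero>" v "pow2 v"] by auto
      then have "pow2 v \<prec> z" using zz lt_add_pos v by simp
      moreover have "v \<oplus> \<one> \<preceq> pow2 v" using lt lt_iff_add_one_le v by simp
      ultimately show "v \<oplus> \<one> \<prec> z" using le_lt_trans[of "v \<oplus> \<one>" "pow2 v" z] v z by simp
    qed
  qed
  then show ?thesis using sf x exp_rel_pow2 lt_add_one[of "pow2 x"] by (auto simp: B_def)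
qed

lemma pow2_pos: "x \<in> U \<Longrightarrow> \<zero> \<prec> pow2 x"
proof -
  assume x: "x \<in> U"
  show ?thesis using lt_pow2[OF x] zero_le[OF x] lt_trans[of "\<zero>" x "pow2 x"] x by auto
qed

lemma pow2_add: "i \<in> U \<Longrightarrow> j \<in> U \<Longrightarrow> pow2 (i \<oplus> j) = pow2 i \<otimes> pow2 j"
proof -
  assume i: "i \<in> U" and j: "j \<in> U"
  define B where "B = pow2 j \<oplus> pow2 (i \<oplus> j) \<oplus> \<one>"
  have B: "B \<in> U" using i j by (simp add: B_def)
  define e where "e = B ## i ## pow2 i ## (\<lambda>_. \<zero>)"
  have env: "env S e" using B i unfolding e_def by (intro env_cons env_zero) auto
  define f where "f = BAll (Var 1) (BAll (Var 2) (Disj (Neg (Conj (exp_fm E (Var 2) (Var 1))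
       (exp_fm E (Plus (Var 4) (Var 2)) (Var 0)))) (Eq (Var 0) (Times (Var 5) (Var 1)))))"
  have df: "delta0 f" using delta0_E by (simp add: f_def)
  have sf: "sat S (v ## e) f \<longleftrightarrow> (\<forall>z\<in>U. z \<prec> B \<longrightarrow> (\<forall>w\<in>U. w \<prec> B \<longrightarrow>
      exp_rel v z \<longrightarrow> exp_rel (i \<oplus> v) w \<longrightarrow> w = pow2 i \<otimes> z))" for v
    by (simp add: f_def sat_exp_fm_iff e_def)
  have "sat S (j ## e) f"
  proof (rule delta0_induct[OF df env _ _ j])
    show "sat S (\<zero> ## e) f" unfolding sf using exp_rel_iff pow2_zero i by (auto simp: add_zero mult_one)
  next
    fix v assume v: "v \<in> U" and IH: "sat S (v ## e) f"
    show "sat S ((v \<oplus> \<one>) ## e) f" unfolding sf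
    proof (intro ballI impI)
      fix z w assume z: "z \<in> U" "z \<prec> B" "exp_rel (v \<oplus> \<one>) z"
        and w: "w \<in> U" "w \<prec> B" "exp_rel (i \<oplus> (v \<oplus> \<one>)) w"
      have zz: "z = pow2 v \<oplus> pow2 v" using z exp_rel_iff pow2_Suc v by simp
      have ww: "w = pow2 (i \<oplus> v) \<oplus> pow2 (i \<oplus> v)"
        using w exp_rel_iff pow2_Suc[of "i \<oplus> v"] v i add_assoc[of i v "\<one>"] by simp
      have "pow2 v \<prec> B" using zz le_add v z le_lt_trans[of "pow2 v" z B] B by auto
      moreover have "pow2 (i \<oplus> v) \<prec> B" using ww le_add v i w le_lt_trans[of "pow2 (i \<oplus> v)" w B] B by auto
      ultimately have "pow2 (i \<oplus> v) = pow2 i \<otimes> pow2 v" using IH sf v i exp_rel_pow2 by auto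
      then show "w = pow2 i \<otimes> z" using ww zz distrib_left[of "pow2 i" "pow2 v" "pow2 v"] v i by simp
    qed
  qed
  moreover have "pow2 j \<prec> B"
    using i j le_add[of "pow2 j" "pow2 (i \<oplus> j)"] lt_add_one[of "pow2 j \<oplus> pow2 (i \<oplus> j)"]
      le_lt_trans[of "pow2 j" "pow2 j \<oplus> pow2 (i \<oplus> j)" B] by (simp add: B_def)
  moreover have "pow2 (i \<oplus> j) \<prec> B"
    using i j le_add[of "pow2 (i \<oplus> j)" "pow2 j"] add_commute[of "pow2 j" "pow2 (i \<oplus> j)"] lt_add_one[of "pow2 j \<oplus> pow2 (i \<oplus> j)"]
      le_lt_trans[of "pow2 (i \<oplus> j)" "pow2 j \<oplus> pow2 (i \<oplus> j)" B] by (simp add: B_def)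
  ultimately show ?thesis using sf i j exp_rel_pow2 by simp
qed

definition has_bit :: "'a \<Rightarrow> 'a \<Rightarrow> bool" where
  "has_bit k N = (\<exists>q\<in>U. \<exists>r\<in>U. N = q \<otimes> pow2 k \<oplus> r \<and> r \<prec> pow2 k \<and> is_odd q)"

lemma has_bit_iff_odd:
  assumes "Q \<in> U" "R \<in> U" "k \<in> U" "R \<prec> pow2 k"
  shows "has_bit k (Q \<otimes> pow2 k \<oplus> R) \<longleftrightarrow> is_odd Q"
proof
  assume "has_bit k (Q \<otimes> pow2 k \<oplus> R)"
  then obtain q r where qr: "q \<in> U" "r \<in> U" "Q \<otimes> pow2 k \<oplus> R = q \<otimes> pow2 k \<oplus> r" "r \<prec> pow2 k" "is_odd q"
    unfolding has_bit_def by blast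
  then have "Q = q" using division_unique[of Q R q r "pow2 k"] assms by simp
  then show "is_odd Q" using qr by simp
next
  assume "is_odd Q" then show "has_bit k (Q \<otimes> pow2 k \<oplus> R)" unfolding has_bit_def using assms by blast
qed

lemma has_bit_lt: "k \<in> U \<Longrightarrow> N \<in> U \<Longrightarrow> has_bit k N \<Longrightarrow> k \<prec> N"
proof -
  assume k: "k \<in> U" and N: "N \<in> U" and "has_bit k N"
  then obtain q r where qr: "q \<in> U" "r \<in> U" "N = q \<otimes> pow2 k \<oplus> r" "r \<prec> pow2 k" "is_odd q"
    unfolding has_bit_def by blast
  have "\<zero> \<prec> q" using is_odd_pos qr by simp
  then have "pow2 k \<preceq> pow2 k \<otimes> q" using le_mult_pos[of "pow2 k" q] qr k by simp
  then have "pow2 k \<preceq> q \<otimes> pow2 k" using mult_commute[of q "pow2 k"] qr k by simp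
  moreover have "q \<otimes> pow2 k \<preceq> N" using qr le_add k by simp
  moreover have "k \<prec> pow2 k" using lt_pow2 k by simp
  ultimately show "k \<prec> N"
    using qr k lt_le_trans[of k "pow2 k" "q \<otimes> pow2 k"] lt_le_trans[of k "q \<otimes> pow2 k" N] N
    by simp
qed

lemma not_has_bit_zero: "k \<in> U \<Longrightarrow> \<not> has_bit k \<zero>"
  using has_bit_lt[of k "\<zero>"] zero_le[of k] lt_asym[of "\<zero>" k] lt_irrefl[of "\<zero>"] by auto

lemma has_bit_high:
  assumes m: "m \<in> U" and d: "d \<in> U" and h: "h \<in> U" and r: "r \<in> U" and rl: "r \<prec> pow2 m"
  shows "has_bit (m \<oplus> d) (h \<otimes> pow2 m \<oplus> r) \<longleftrightarrow> has_bit d h"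
proof -
  obtain q' r' where qr: "q' \<in> U" "r' \<in> U" "h = q' \<otimes> pow2 d \<oplus> r'" "r' \<prec> pow2 d"
    using division_exists[of "pow2 d" h] pow2_pos d h by auto
  have "h \<otimes> pow2 m \<oplus> r = (q' \<otimes> pow2 d \<oplus> r') \<otimes> pow2 m \<oplus> r" using qr by simp
  also have "\<dots> = q' \<otimes> (pow2 d \<otimes> pow2 m) \<oplus> (r' \<otimes> pow2 m \<oplus> r)"
    using qr m d r by (simp add: distrib_right mult_assoc add_assoc)
  also have "\<dots> = q' \<otimes> pow2 (m \<oplus> d) \<oplus> (r' \<otimes> pow2 m \<oplus> r)"
    using qr m d r pow2_add[of m d] mult_commute[of "pow2 d" "pow2 m"] by simp
  finally have eq: "h \<otimes> pow2 m \<oplus> r = q' \<otimes> pow2 (m \<oplus> d) \<oplus> (r' \<otimes> pow2 m \<oplus> r)" .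
  have R: "r' \<otimes> pow2 m \<oplus> r \<prec> pow2 (m \<oplus> d)"
    using remainder_bound[of r' r "pow2 m" "pow2 d"] qr m d r rl pow2_add[of m d] mult_commute[of "pow2 m" "pow2 d"] by simp
  have "has_bit (m \<oplus> d) (h \<otimes> pow2 m \<oplus> r) \<longleftrightarrow> is_odd q'"
    unfolding eq using has_bit_iff_odd[OF qr(1) _ _ R] qr m d r by simp
  also have "\<dots> \<longleftrightarrow> has_bit d h" using has_bit_iff_odd[of q' r' d] qr d by simp
  finally show ?thesis .
qed

lemma has_bit_low:
  assumes k: "k \<in> U" and d: "d \<in> U" and h: "h \<in> U" and r: "r \<in> U" and dp: "\<zero> \<prec> d"
  shows "has_bit k (h \<otimes> pow2 (k \<oplus> d) \<oplus> r) \<longleftrightarrow> has_bit k r"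
proof -
  obtain q r0 where qr: "q \<in> U" "r0 \<in> U" "r = q \<otimes> pow2 k \<oplus> r0" "r0 \<prec> pow2 k"
    using division_exists[of "pow2 k" r] pow2_pos k r by auto
  obtain d' where d': "d' \<in> U" "\<one> \<oplus> d' = d" using le_imp_add[of "\<one>" d] pos_imp_one_le[OF d dp] d by auto
  have Pd: "pow2 d = pow2 d' \<oplus> pow2 d'" using d' pow2_Suc[of d'] add_commute[of "\<one>" d'] by simp
  define t where "t = h \<otimes> pow2 d'"
  have t: "t \<in> U" using h d' by (simp add: t_def)
  have eq: "h \<otimes> pow2 (k \<oplus> d) \<oplus> r = (t \<oplus> t \<oplus> q) \<otimes> pow2 k \<oplus> r0"
    using qr k d h d' Pd by (simp add: t_def pow2_add distrib_left distrib_right add_mult_ac)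
  have "has_bit k (h \<otimes> pow2 (k \<oplus> d) \<oplus> r) \<longleftrightarrow> is_odd (t \<oplus> t \<oplus> q)"
    unfolding eq using has_bit_iff_odd qr t k by simp
  also have "\<dots> \<longleftrightarrow> is_odd q" using is_odd_double_add t qr by simp
  also have "\<dots> \<longleftrightarrow> has_bit k r" using has_bit_iff_odd[of q r0 k] qr k by simp
  finally show ?thesis .
qed

lemma has_bit_add_pow2:
  assumes y: "y \<in> U" and al: "\<alpha> \<in> U" and nb: "\<not> has_bit y \<alpha>" and k: "k \<in> U"
  shows "has_bit k (\<alpha> \<oplus> pow2 y) \<longleftrightarrow> has_bit k \<alpha> \<or> k = y"
proof -
  obtain Q r where qr: "Q \<in> U" "r \<in> U" "\<alpha> = Q \<otimes> pow2 y \<oplus> r" "r \<prec> pow2 y"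
    using division_exists[of "pow2 y" \<alpha>] pow2_pos y al by auto
  have nQ: "\<not> is_odd Q" using nb has_bit_iff_odd[of Q r y] qr y by simp
  then obtain h where h: "h \<in> U" "Q = h \<oplus> h" using even_or_odd[of Q] qr unfolding is_odd_def by auto
  have e1: "\<alpha> = h \<otimes> pow2 (y \<oplus> \<one>) \<oplus> r"
    using qr h y by (simp add: pow2_Suc distrib_left distrib_right add_mult_ac)
  have e2: "\<alpha> \<oplus> pow2 y = h \<otimes> pow2 (y \<oplus> \<one>) \<oplus> (r \<oplus> pow2 y)"
    using qr h y by (simp add: pow2_Suc distrib_left distrib_right add_mult_ac)
  have "\<alpha> \<oplus> pow2 y = Q \<otimes> pow2 y \<oplus> (r \<oplus> pow2 y)" using qr y by (simp add: add_assoc)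
  also have "\<dots> = Q \<otimes> pow2 y \<oplus> (pow2 y \<oplus> r)" using qr y add_commute[of r "pow2 y"] by simp
  also have "\<dots> = (Q \<oplus> \<one>) \<otimes> pow2 y \<oplus> r" using qr y by (simp add: distrib_right one_mult add_assoc)
  finally have e3: "\<alpha> \<oplus> pow2 y = (Q \<oplus> \<one>) \<otimes> pow2 y \<oplus> r" .
  have rl: "r \<oplus> pow2 y \<prec> pow2 (y \<oplus> \<one>)" using qr y pow2_Suc add_lt_mono by simp
  have rl1: "r \<prec> pow2 (y \<oplus> \<one>)"
    using qr y pow2_Suc lt_add_pos[of "pow2 y" "pow2 y"] pow2_pos lt_trans[of r "pow2 y" "pow2 y \<oplus> pow2 y"] by simp
  consider "k = y" | "y \<prec> k" | "k \<prec> y" using lt_linear k y by blast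
  then show ?thesis
  proof cases
    case 1
    have "is_odd (Q \<oplus> \<one>)" using h unfolding is_odd_def by blast
    then show ?thesis using 1 e3 has_bit_iff_odd[of "Q \<oplus> \<one>" r y] qr y by simp
  next
    case 2
    then have "y \<oplus> \<one> \<preceq> k" using lt_iff_add_one_le y k by simp
    then obtain d where d: "d \<in> U" "y \<oplus> \<one> \<oplus> d = k" using le_imp_add[of "y \<oplus> \<one>" k] y k by auto
    have "has_bit k \<alpha> \<longleftrightarrow> has_bit d h" using has_bit_high[of "y \<oplus> \<one>" d h r] d h qr y rl1 e1 by simp
    moreover have "has_bit k (\<alpha> \<oplus> pow2 y) \<longleftrightarrow> has_bit d h"
      using has_bit_high[of "y \<oplus> \<one>" d h "r \<oplus> pow2 y"] d h qr y rl e2 by simp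
    moreover have "k \<noteq> y" using 2 lt_irrefl y by auto
    ultimately show ?thesis by simp
  next
    case 3
    then obtain d where d: "d \<in> U" "k \<oplus> d = y" using lt_imp_add[of k y] y k by auto
    have dp: "\<zero> \<prec> d" using d 3 zero_le[of d] add_zero[of k] lt_irrefl[of k] k by auto
    have "has_bit k \<alpha> \<longleftrightarrow> has_bit k r" using has_bit_low[of k d Q r] d qr k dp by simp
    moreover have "has_bit k (\<alpha> \<oplus> pow2 y) \<longleftrightarrow> has_bit k r"
      using has_bit_low[of k d "Q \<oplus> \<one>" r] d qr k dp e3 by simp
    moreover have "k \<noteq> y" using 3 lt_irrefl y by auto
    ultimately show ?thesis by simp
  qed
qed

lemma add_pow2_bound:
  assumes y: "y \<in> U" and al: "\<alpha> \<in> U" and a: "a \<in> U" and nb: "\<not> has_bit y \<alpha>"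
    and ya: "y \<prec> a" and alp: "\<alpha> \<prec> pow2 a"
  shows "\<alpha> \<oplus> pow2 y \<prec> pow2 a"
proof -
  obtain Q r where qr: "Q \<in> U" "r \<in> U" "\<alpha> = Q \<otimes> pow2 y \<oplus> r" "r \<prec> pow2 y"
    using division_exists[of "pow2 y" \<alpha>] pow2_pos y al by auto
  have nQ: "\<not> is_odd Q" using nb has_bit_iff_odd[of Q r y] qr y by simp
  then obtain h where h: "h \<in> U" "Q = h \<oplus> h" using even_or_odd[of Q] qr unfolding is_odd_def by auto
  have e1: "\<alpha> = h \<otimes> pow2 (y \<oplus> \<one>) \<oplus> r"
    using qr h y by (simp add: pow2_Suc distrib_left distrib_right add_mult_ac)
  have e2: "\<alpha> \<oplus> pow2 y = h \<otimes> pow2 (y \<oplus> \<one>) \<oplus> (r \<oplus> pow2 y)"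
    using qr h y by (simp add: pow2_Suc distrib_left distrib_right add_mult_ac)
  have rl: "r \<oplus> pow2 y \<prec> pow2 (y \<oplus> \<one>)" using qr y pow2_Suc add_lt_mono by simp
  have "y \<oplus> \<one> \<preceq> a" using lt_iff_add_one_le y a ya by simp
  then obtain d where d: "d \<in> U" "y \<oplus> \<one> \<oplus> d = a" using le_imp_add[of "y \<oplus> \<one>" a] y a by auto
  have Pa: "pow2 a = pow2 d \<otimes> pow2 (y \<oplus> \<one>)" using d y pow2_add[of "y \<oplus> \<one>" d] mult_commute by simp
  have "h \<otimes> pow2 (y \<oplus> \<one>) \<preceq> \<alpha>" using e1 le_add h y qr by simp
  then have "h \<otimes> pow2 (y \<oplus> \<one>) \<prec> pow2 d \<otimes> pow2 (y \<oplus> \<one>)"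
    using alp Pa le_lt_trans[of _ \<alpha> "pow2 a"] h y al a d by simp
  then have "h \<prec> pow2 d" using mult_lt_cancel[of h "pow2 d" "pow2 (y \<oplus> \<one>)"] h d y by simp
  then show ?thesis
    using remainder_bound[of h "r \<oplus> pow2 y" "pow2 (y \<oplus> \<one>)" "pow2 d"] e2 Pa rl h d y qr by simp
qed

lemma bit_of_iff_has_bit [simp]: "k \<in> U \<Longrightarrow> N \<in> U \<Longrightarrow> bit_of S E k N \<longleftrightarrow> has_bit k N"
proof
  assume k: "k \<in> U" and N: "N \<in> U" and "bit_of S E k N"
  then obtain z q r h where H: "z \<in> U" "exp_rel k z" "q \<in> U" "r \<in> U" "r \<prec> z" "N = q \<otimes> z \<oplus> r"
      "h \<in> U" "q = h \<oplus> h \<oplus> \<one>"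
    unfolding bit_of_def exp_rel_def by blast
  have "z = pow2 k" using H exp_rel_iff k by simp
  then show "has_bit k N" unfolding has_bit_def is_odd_def using H by blast
next
  assume k: "k \<in> U" and N: "N \<in> U" and "has_bit k N"
  then obtain q r h where H: "q \<in> U" "r \<in> U" "N = q \<otimes> pow2 k \<oplus> r" "r \<prec> pow2 k" "h \<in> U"
      "q = h \<oplus> h \<oplus> \<one>"
    unfolding has_bit_def is_odd_def by blast
  have qp: "\<zero> \<prec> q" using is_odd_pos[of q] H unfolding is_odd_def by blast
  have Pq: "pow2 k \<preceq> q \<otimes> pow2 k"
    using le_mult_pos[of "pow2 k" q] mult_commute[of q "pow2 k"] H k qp by simp
  have qN: "q \<otimes> pow2 k \<preceq> N" using H k le_add by simp
  have PN: "pow2 k \<preceq> N" using le_trans[OF _ _ _ Pq qN] H k N by simp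
  have "q \<preceq> q \<otimes> pow2 k" using le_mult_pos[of q "pow2 k"] pow2_pos k H by simp
  then have qN': "q \<preceq> N" using le_trans[OF _ _ _ _ qN] H k N by simp
  have "h \<preceq> q" using H le_add[of h "h \<oplus> \<one>"] add_assoc[of h h "\<one>"] by simp
  then have hN: "h \<preceq> N" using le_trans[OF _ _ _ _ qN'] H N by simp
  have "pow2 k \<prec> N \<oplus> \<one>" "q \<prec> N \<oplus> \<one>" "h \<prec> N \<oplus> \<one>"
    using lt_add_one_iff PN qN' hN H k N by simp_all
  then show "bit_of S E k N"
    unfolding bit_of_def exp_rel_def[symmetric] using H exp_rel_pow2[OF k] pow2_closed[OF k] by blast
qed

end

section \<open>Witness codes\<close>

definition code :: "'a struc \<Rightarrow> nat \<Rightarrow> 'a \<Rightarrow> 'a \<Rightarrow> 'a \<Rightarrow> 'a \<Rightarrow> 'a" where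
  "code S j u i y a = pl S (tm S (pl S (tm S u (numv S j)) i) a) y"

definition code_trm :: "nat \<Rightarrow> trm \<Rightarrow> trm \<Rightarrow> trm \<Rightarrow> trm \<Rightarrow> trm" where
  "code_trm j u i y a = Plus (Times (Plus (Times u (num_trm j)) i) a) y"

lemma evt_code_trm [simp]:
  "evt S e (code_trm j u i y a) = code S j (evt S e u) (evt S e i) (evt S e y) (evt S e a)"
  by (simp add: code_trm_def code_def)

definition tuple_coded :: "'a struc \<Rightarrow> fm \<Rightarrow> nat \<Rightarrow> 'a \<Rightarrow> 'a \<Rightarrow> 'a \<Rightarrow> 'a list \<Rightarrow> bool" where
  "tuple_coded S E j a G y us \<longleftrightarrow> (\<forall>i<j. bit_of S E (code S j (us ! i) (numv S i) y a) G)"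

definition members_coded :: "'a struc \<Rightarrow> fm \<Rightarrow> nat \<Rightarrow> 'a \<Rightarrow> 'a \<Rightarrow> 'a \<Rightarrow> bool" where
  "members_coded S E j a \<alpha> G \<longleftrightarrow> (\<forall>y\<in>univ S. ls S y a \<longrightarrow> bit_of S E y \<alpha> \<longrightarrow>
     (\<exists>us. bounded_tuple S j G us \<and> tuple_coded S E j a G y us))"

definition codes_members_only :: "'a struc \<Rightarrow> fm \<Rightarrow> nat \<Rightarrow> 'a \<Rightarrow> 'a \<Rightarrow> 'a \<Rightarrow> bool" where
  "codes_members_only S E j a \<alpha> G \<longleftrightarrow> (\<forall>y\<in>univ S. ls S y a \<longrightarrow> (\<forall>i\<in>univ S. ls S i (numv S j) \<longrightarrow>
     (\<forall>u\<in>univ S. ls S u G \<longrightarrow> bit_of S E (code S j u i y a) G \<longrightarrow> bit_of S E y \<alpha>)))"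

definition coded_tuples_refute ::
    "'a struc \<Rightarrow> fm \<Rightarrow> nat \<Rightarrow> fm \<Rightarrow> 'a \<Rightarrow> (nat \<Rightarrow> 'a) \<Rightarrow> 'a \<Rightarrow> 'a \<Rightarrow> 'a \<Rightarrow> bool" where
  "coded_tuples_refute S E j p x e a \<alpha> G \<longleftrightarrow> (\<forall>y\<in>univ S. ls S y a \<longrightarrow> bit_of S E y \<alpha> \<longrightarrow>
     (\<forall>us. bounded_tuple S j G us \<longrightarrow> tuple_coded S E j a G y us \<longrightarrow> \<not> sat S (prepend us (x ## y ## e)) p))"

text \<open>Read \<open>\<alpha>\<close> as the set of its bits below \<open>a\<close>. Then \<open>G\<close> is a witness code for \<open>\<alpha>\<close> if it
  records, for every member \<open>y\<close>, a tuple \<open>us < G\<close> with \<open>\<not> p(us, x, y)\<close>, i.e. a counterexample to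
  \<open>\<forall>us. p(us, x, y)\<close>; entry \<open>i\<close> of the tuple for \<open>y\<close> is recorded as bit \<open>(u j + i) a + y\<close> of \<open>G\<close>.\<close>
definition witness_code ::
    "'a struc \<Rightarrow> fm \<Rightarrow> nat \<Rightarrow> fm \<Rightarrow> 'a \<Rightarrow> (nat \<Rightarrow> 'a) \<Rightarrow> 'a \<Rightarrow> 'a \<Rightarrow> 'a \<Rightarrow> bool" where
  "witness_code S E j p x e a \<alpha> G \<longleftrightarrow> members_coded S E j a \<alpha> G \<and> codes_members_only S E j a \<alpha> G \<and>
     coded_tuples_refute S E j p x e a \<alpha> G"

text \<open>The formulas below expressing these notions are evaluated in environments
  \<open>G ## x ## \<alpha> ## a ## e\<close>.\<close>

definition tuple_coded_fm :: "fm \<Rightarrow> nat \<Rightarrow> fm" where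
  "tuple_coded_fm E j =
     conjs (map (\<lambda>i. bit_fm E (code_trm j (Var i) (num_trm i) (Var j) (Var (j + 4))) (Var (j + 1)))
       [0..<j])"

lemma sat_tuple_coded_fm: "length us = j \<Longrightarrow>
    sat S (prepend us (y ## G ## x ## \<alpha> ## a ## e)) (tuple_coded_fm E j) \<longleftrightarrow> tuple_coded S E j a G y us"
  using prepend_beyond[of us _ 4] prepend_beyond[of us _ 1]
  by (auto simp: tuple_coded_fm_def tuple_coded_def prepend_nth)

definition members_coded_fm :: "fm \<Rightarrow> nat \<Rightarrow> fm" where
  "members_coded_fm E j =
     BAll (Var 3) (Disj (Neg (bit_fm E (Var 0) (Var 3))) (bexs j (Suc 0) (tuple_coded_fm E j)))"

lemma sat_bexs_tuple_coded_fm: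
  "sat S (y ## G ## x ## \<alpha> ## a ## e) (bexs j (Suc 0) (tuple_coded_fm E j)) \<longleftrightarrow>
    (\<exists>us. bounded_tuple S j G us \<and> tuple_coded S E j a G y us)"
  unfolding sat_bexs by (rule ex_cong1) (metis bounded_tuple_def cons_env_simps sat_tuple_coded_fm)

lemma sat_members_coded_fm:
  "sat S (G ## x ## \<alpha> ## a ## e) (members_coded_fm E j) \<longleftrightarrow> members_coded S E j a \<alpha> G"
  by (simp add: members_coded_fm_def members_coded_def sat_bexs_tuple_coded_fm)

definition codes_members_only_fm :: "fm \<Rightarrow> nat \<Rightarrow> fm" where
  "codes_members_only_fm E j =
     BAll (Var 3) (BAll (num_trm j) (BAll (Var 2)
       (Disj (Neg (bit_fm E (code_trm j (Var 0) (Var 1) (Var 2) (Var 6)) (Var 3)))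
         (bit_fm E (Var 2) (Var 5)))))"

lemma sat_codes_members_only_fm:
  "sat S (G ## x ## \<alpha> ## a ## e) (codes_members_only_fm E j) \<longleftrightarrow> codes_members_only S E j a \<alpha> G"
  by (auto simp: codes_members_only_fm_def codes_members_only_def)

definition refute_ren :: "nat \<Rightarrow> nat \<Rightarrow> nat" where
  "refute_ren j i = (if i < j then i else if i = j then j + 2 else if i = j + 1 then j else i + 3)"

lemma prepend_comp_refute_ren: "length us = j \<Longrightarrow>
    prepend us (y ## G ## x ## \<alpha> ## a ## e) \<circ> refute_ren j = prepend us (x ## y ## e)"
proof (rule ext)
  fix i assume l: "length us = j"
  have beyond: "prepend us e' (j + k) = e' k" for e' k
    unfolding l[symmetric] by (rule prepend_beyond)
  consider "i < j" | "i = j" | "i = j + 1" | "j + 2 \<le> i" by linarith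
  then show "(prepend us (y ## G ## x ## \<alpha> ## a ## e) \<circ> refute_ren j) i = prepend us (x ## y ## e) i"
  proof cases
    case 1
    then show ?thesis using l by (simp add: refute_ren_def prepend_nth)
  next
    case 2
    then show ?thesis using beyond[of _ 2] beyond[of _ 0] by (simp add: refute_ren_def)
  next
    case 3
    then show ?thesis using beyond[of _ 1] beyond[of _ 0] by (simp add: refute_ren_def)
  next
    case 4
    then obtain k where k: "i = j + 2 + k" using le_iff_add by blast
    then have "refute_ren j i = j + (5 + k)" by (simp add: refute_ren_def)
    then show ?thesis using k beyond[of _ "5 + k"] beyond[of _ "2 + k"]
      by (simp add: numeral_eq_Suc add.assoc)
  qed
qed

definition coded_tuples_refute_fm :: "fm \<Rightarrow> nat \<Rightarrow> fm \<Rightarrow> fm" where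
  "coded_tuples_refute_fm E j p = ball (Var 3) (balls j (Suc 0)
     (prenex_disj (Neg (Conj (bit_fm E (Var j) (Var (j + 3))) (tuple_coded_fm E j)))
       (dual (rename (refute_ren j) p))))"

lemma sat_coded_tuples_refute_fm: "univ S \<noteq> {} \<Longrightarrow>
    sat S (G ## x ## \<alpha> ## a ## e) (coded_tuples_refute_fm E j p) \<longleftrightarrow> coded_tuples_refute S E j p x e a \<alpha> G"
  using prepend_beyond[of _ _ 3]
  by (auto simp: coded_tuples_refute_fm_def coded_tuples_refute_def sat_ball sat_balls
      bounded_tuple_def sat_tuple_coded_fm prepend_comp_refute_ren)

definition witness_code_fm :: "fm \<Rightarrow> nat \<Rightarrow> fm \<Rightarrow> fm" where
  "witness_code_fm E j p =
     prenex_conj False (members_coded_fm E j)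
       (prenex_conj False (codes_members_only_fm E j) (coded_tuples_refute_fm E j p))"

lemma sat_witness_code_fm: "univ S \<noteq> {} \<Longrightarrow>
    sat S (G ## x ## \<alpha> ## a ## e) (witness_code_fm E j p) \<longleftrightarrow> witness_code S E j p x e a \<alpha> G"
  by (simp add: witness_code_fm_def witness_code_def sat_members_coded_fm
      sat_codes_members_only_fm sat_coded_tuples_refute_fm)

lemma pi_witness_code_fm: "delta0 E \<Longrightarrow> sigma n p \<Longrightarrow> pi n (witness_code_fm E j p)"
  unfolding witness_code_fm_def coded_tuples_refute_fm_def
  by (intro prenex_conj_pi delta0_pi pi_ball pi_balls prenex_disj_pi dual_sigma_pi sigma_pi_rename)
    (simp_all add: members_coded_fm_def codes_members_only_fm_def tuple_coded_fm_def)

definition sigma_members_ren :: "nat \<Rightarrow> nat" where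
  "sigma_members_ren i = (if i = 0 then 2 else if i = 1 then 0 else i + 3)"

definition sigma_members_fm :: "fm \<Rightarrow> fm \<Rightarrow> fm" where
  "sigma_members_fm E \<sigma> = All (prenex_disj (Neg (Lt (Var 0) (Var 4)))
     (prenex_disj (dual (rename sigma_members_ren \<sigma>)) (bit_fm E (Var 0) (Var 3))))"

lemma sat_sigma_members_fm:
  assumes "univ S \<noteq> {}"
  shows "sat S (G ## x ## \<alpha> ## a ## e) (sigma_members_fm E \<sigma>) \<longleftrightarrow>
    (\<forall>y\<in>univ S. ls S y a \<longrightarrow> sat S (x ## y ## e) \<sigma> \<longrightarrow> bit_of S E y \<alpha>)"
proof -
  have "(y ## G ## x ## \<alpha> ## a ## e) \<circ> sigma_members_ren = x ## y ## e" for y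
    by (rule ext) (simp add: sigma_members_ren_def cons_env_def split: nat.split)
  then show ?thesis using assms by (auto simp: sigma_members_fm_def)
qed

lemma pi_sigma_members_fm: "delta0 E \<Longrightarrow> sigma (Suc n) \<sigma> \<Longrightarrow> pi (Suc n) (sigma_members_fm E \<sigma>)"
  unfolding sigma_members_fm_def
  by (simp add: prenex_disj_pi delta0_pi dual_sigma_pi sigma_pi_rename)

definition covering_witness_code_fm :: "fm \<Rightarrow> nat \<Rightarrow> fm \<Rightarrow> fm \<Rightarrow> fm" where
  "covering_witness_code_fm E j \<sigma> p = Ex (Ex (prenex_conj False (sigma_members_fm E \<sigma>) (witness_code_fm E j p)))"

lemma sat_covering_witness_code_fm: "univ S \<noteq> {} \<Longrightarrow> sat S (\<alpha> ## a ## e) (covering_witness_code_fm E j \<sigma> p) \<longleftrightarrow>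
    (\<exists>x\<in>univ S. \<exists>G\<in>univ S. (\<forall>y\<in>univ S. ls S y a \<longrightarrow> sat S (x ## y ## e) \<sigma> \<longrightarrow> bit_of S E y \<alpha>) \<and>
       witness_code S E j p x e a \<alpha> G)"
  by (simp add: covering_witness_code_fm_def sat_sigma_members_fm sat_witness_code_fm)

lemma sigma_covering_witness_code_fm:
  "delta0 E \<Longrightarrow> sigma (Suc n) \<sigma> \<Longrightarrow> sigma n p \<Longrightarrow> sigma (Suc (Suc n)) (covering_witness_code_fm E j \<sigma> p)"
  unfolding covering_witness_code_fm_def
  by (simp add: sigma_pi.sS prenex_conj_pi pi_sigma_members_fm sigma_pi_Suc(2) pi_witness_code_fm)

definition code_above_ren :: "nat \<Rightarrow> nat" where
  "code_above_ren i =
     (if i = 0 then 0 else if i = 1 then 3 else if i = 2 then 1 else if i = 3 then 4 else i + 2)"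

definition code_above_fm :: "fm \<Rightarrow> nat \<Rightarrow> fm \<Rightarrow> fm" where
  "code_above_fm E j p = Ex (prenex_conj True
     (Conj (Disj (Lt (Var 1) (Var 0)) (Eq (Var 1) (Var 0))) (Lt (Var 0) (Var 4)))
     (Ex (rename code_above_ren (witness_code_fm E j p))))"

lemma sat_code_above_fm:
  assumes "univ S \<noteq> {}"
  shows "sat S (t ## x ## a ## N ## e) (code_above_fm E j p) \<longleftrightarrow>
    (\<exists>\<alpha>\<in>univ S. (ls S t \<alpha> \<or> t = \<alpha>) \<and> ls S \<alpha> N \<and> (\<exists>G\<in>univ S. witness_code S E j p x e a \<alpha> G))"
proof -
  have "(G ## \<alpha> ## t ## x ## a ## N ## e) \<circ> code_above_ren = G ## x ## \<alpha> ## a ## e" for G \<alpha>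
    by (rule ext) (simp add: code_above_ren_def cons_env_def split: nat.split)
  then show ?thesis using assms by (simp add: code_above_fm_def sat_witness_code_fm)
qed

lemma sigma_code_above_fm: "delta0 E \<Longrightarrow> sigma n p \<Longrightarrow> sigma (Suc n) (code_above_fm E j p)"
  unfolding code_above_fm_def
  by (simp add: prenex_conj_sigma delta0_sigma sigma_pi.sS sigma_pi_rename pi_witness_code_fm)

definition exists_above_ren :: "nat \<Rightarrow> nat" where
  "exists_above_ren i = (if i = 0 then 0 else if i = 1 then 2 else i + 1)"

definition exists_above_fm :: "fm \<Rightarrow> fm \<Rightarrow> fm" where
  "exists_above_fm \<sigma> \<pi> = Ex (prenex_conj True (Lt (Var 1) (Var 0))
     (prenex_conj True (rename exists_above_ren \<sigma>) (rename exists_above_ren \<pi>)))"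

lemma sat_exists_above_fm:
  assumes "univ S \<noteq> {}"
  shows "sat S (b ## y ## e) (exists_above_fm \<sigma> \<pi>) \<longleftrightarrow>
    (\<exists>x\<in>univ S. ls S b x \<and> sat S (x ## y ## e) \<sigma> \<and> sat S (x ## y ## e) \<pi>)"
proof -
  have "(x ## b ## y ## e) \<circ> exists_above_ren = x ## y ## e" for x
    by (rule ext) (simp add: exists_above_ren_def cons_env_def split: nat.split)
  then show ?thesis using assms by (simp add: exists_above_fm_def)
qed

lemma sigma_exists_above_fm:
  "sigma (Suc n) \<sigma> \<Longrightarrow> pi (Suc n) \<pi> \<Longrightarrow> sigma (Suc (Suc n)) (exists_above_fm \<sigma> \<pi>)"
  unfolding exists_above_fm_def
  by (simp add: prenex_conj_sigma delta0_sigma sigma_pi_Suc(1) sigma_pi.sS sigma_pi_rename)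

section \<open>Extending a witness code\<close>

context idelta0_exp
begin

lemma univ_nonempty: "U \<noteq> {}"
  using zero_closed by blast

lemma code_closed [simp]: "u \<in> U \<Longrightarrow> i \<in> U \<Longrightarrow> y \<in> U \<Longrightarrow> a \<in> U \<Longrightarrow> code S j u i y a \<in> U"
  by (simp add: code_def)

lemma code_inj:
  assumes U: "u \<in> U" "i \<in> U" "y \<in> U" "u' \<in> U" "i' \<in> U" "y' \<in> U" "a \<in> U"
    and lt: "y \<prec> a" "y' \<prec> a" "i \<prec> numv S j" "i' \<prec> numv S j"
    and eq: "code S j u i y a = code S j u' i' y' a"
  shows "u = u' \<and> i = i' \<and> y = y'"
proof -
  let ?J = "numv S j"
  have 1: "u \<otimes> ?J \<oplus> i = u' \<otimes> ?J \<oplus> i' \<and> y = y'"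
    by (rule division_unique[of "u \<otimes> ?J \<oplus> i" y "u' \<otimes> ?J \<oplus> i'" y' a])
      (use U lt eq in \<open>simp_all add: code_def\<close>)
  have "u = u' \<and> i = i'"
    by (rule division_unique[of u i u' i' ?J]) (use U lt 1 in simp_all)
  then show ?thesis using 1 by simp
qed

lemma le_code:
  assumes U: "u \<in> U" "i \<in> U" "y \<in> U" "a \<in> U" and pos: "\<zero> \<prec> numv S j" "\<zero> \<prec> a"
  shows "u \<preceq> code S j u i y a"
proof -
  let ?J = "numv S j"
  have 1: "u \<preceq> u \<otimes> ?J" by (rule le_mult_pos) (use U pos in simp_all)
  have 2: "u \<otimes> ?J \<preceq> u \<otimes> ?J \<oplus> i" by (rule le_add) (use U in simp_all)
  have 3: "u \<otimes> ?J \<oplus> i \<preceq> (u \<otimes> ?J \<oplus> i) \<otimes> a" by (rule le_mult_pos) (use U pos in simp_all)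
  have 4: "(u \<otimes> ?J \<oplus> i) \<otimes> a \<preceq> code S j u i y a" unfolding code_def by (rule le_add) (use U in simp_all)
  have 5: "u \<preceq> (u \<otimes> ?J \<oplus> i) \<otimes> a"
    by (rule le_trans[OF _ _ _ le_trans[OF _ _ _ 1 2] 3]) (use U in simp_all)
  show ?thesis by (rule le_trans[OF _ _ _ 5 4]) (use U in simp_all)
qed

lemma lt_of_has_bit_code:
  assumes U: "u \<in> U" "i \<in> U" "y \<in> U" "a \<in> U" "H \<in> U"
    and lt: "y \<prec> a" "i \<prec> numv S j" and bit: "has_bit (code S j u i y a) H"
  shows "u \<prec> H"
proof -
  have "u \<preceq> code S j u i y a"
    using le_code U pos_of_gt[of i "numv S j"] pos_of_gt[of y a] lt by simp
  moreover have "code S j u i y a \<prec> H" using has_bit_lt U bit by simp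
  ultimately show ?thesis using le_lt_trans[of u "code S j u i y a" H] U by simp
qed

lemma exists_add_bits:
  assumes "G \<in> U" "set ks \<subseteq> U" "distinct ks" "\<forall>k\<in>set ks. \<not> has_bit k G"
  shows "\<exists>G'\<in>U. G \<preceq> G' \<and> (\<forall>k\<in>U. has_bit k G' \<longleftrightarrow> has_bit k G \<or> k \<in> set ks)"
  using assms
proof (induct ks arbitrary: G)
  case (Cons k ks)
  have k: "k \<in> U" using Cons.prems by simp
  define G1 where "G1 = G \<oplus> pow2 k"
  have G1: "G1 \<in> U" "G \<preceq> G1" using Cons.prems k le_add by (simp_all add: G1_def)
  have bits1: "has_bit k' G1 \<longleftrightarrow> has_bit k' G \<or> k' = k" if "k' \<in> U" for k'
    using has_bit_add_pow2[OF k _ _ that] Cons.prems by (simp add: G1_def)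
  have "\<forall>k'\<in>set ks. \<not> has_bit k' G1" using Cons.prems bits1 by auto
  then obtain G' where G': "G' \<in> U" "G1 \<preceq> G'" "\<forall>k'\<in>U. has_bit k' G' \<longleftrightarrow> has_bit k' G1 \<or> k' \<in> set ks"
    using Cons.hyps[OF G1(1)] Cons.prems by auto
  have "G \<preceq> G'" using le_trans[OF _ _ _ G1(2) G'(2)] Cons.prems G1 G' by simp
  then show ?case using G' bits1 by auto
qed auto

context
  fixes j p x e a \<alpha> G y0 us0
  assumes closed: "a \<in> U" "\<alpha> \<in> U" "G \<in> U"
    and witness: "witness_code S E j p x e a \<alpha> G"
    and y0: "y0 \<in> U" "y0 \<prec> a" "\<not> has_bit y0 \<alpha>"
    and us0: "length us0 = j" "set us0 \<subseteq> U" "\<not> sat S (prepend us0 (x ## y0 ## e)) p"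
begin

lemma us0_nth_closed: "i < j \<Longrightarrow> us0 ! i \<in> U"
  using us0 by (metis nth_mem subsetD)

lemma has_bit_code_imp_member:
  assumes "y \<in> U" "i \<in> U" "u \<in> U" "y \<prec> a" "i \<prec> numv S j" "has_bit (code S j u i y a) G"
  shows "has_bit y \<alpha>"
proof -
  have "u \<prec> G" using lt_of_has_bit_code assms closed by blast
  then show ?thesis
    using witness assms closed unfolding witness_code_def codes_members_only_def by auto
qed

lemma fresh_codes: "i < j \<Longrightarrow> \<not> has_bit (code S j (us0 ! i) (numv S i) y0 a) G"
  using has_bit_code_imp_member[of y0 "numv S i" "us0 ! i"] numv_lt us0_nth_closed y0 by auto

lemma code_eq_new_code:
  assumes "u \<in> U" "i \<in> U" "y \<in> U" "y \<prec> a" "i \<prec> numv S j" "i' < j"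
    and "code S j u i y a = code S j (us0 ! i') (numv S i') y0 a"
  shows "u = us0 ! i' \<and> i = numv S i' \<and> y = y0"
  using code_inj[of u i y "us0 ! i'" "numv S i'" y0 a] assms closed y0 us0_nth_closed numv_lt by simp

context
  fixes \<alpha>' G'
  assumes closed': "\<alpha>' \<in> U" "G' \<in> U" "G \<preceq> G'"
    and bits_\<alpha>': "\<And>k. k \<in> U \<Longrightarrow> has_bit k \<alpha>' \<longleftrightarrow> has_bit k \<alpha> \<or> k = y0"
    and bits_G': "\<And>k. k \<in> U \<Longrightarrow>
      has_bit k G' \<longleftrightarrow> has_bit k G \<or> (\<exists>i<j. k = code S j (us0 ! i) (numv S i) y0 a)"
begin

lemma us0_coded: "bounded_tuple S j G' us0 \<and> tuple_coded S E j a G' y0 us0"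
proof -
  have bits: "has_bit (code S j (us0 ! i) (numv S i) y0 a) G'" if "i < j" for i
    using bits_G'[of "code S j (us0 ! i) (numv S i) y0 a"] that us0_nth_closed closed y0 by auto
  have "u \<prec> G'" if u: "u \<in> set us0" for u
  proof -
    obtain i where i: "i < j" "u = us0 ! i" using u us0 by (auto simp: in_set_conv_nth)
    show ?thesis
      using lt_of_has_bit_code[OF us0_nth_closed[OF i(1)] numv_closed y0(1) closed(1) closed'(2)
          y0(2) numv_lt[OF i(1)] bits[OF i(1)]] i(2) by simp
  qed
  then show ?thesis
    using bits us0 closed closed' y0 us0_nth_closed by (simp add: bounded_tuple_def tuple_coded_def)
qed

lemma tuple_coded_extended_cases:
  assumes y: "y \<in> U" "y \<prec> a" and us: "bounded_tuple S j H us" "tuple_coded S E j a G' y us"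
    and i: "i < j"
  shows "has_bit (code S j (us ! i) (numv S i) y a) G \<or> (y = y0 \<and> us ! i = us0 ! i)"
proof -
  have u: "us ! i \<in> U" using bounded_tuple_nth[OF us(1) i] .
  have "has_bit (code S j (us ! i) (numv S i) y a) G'"
    using us(2) i closed' closed y bounded_tuple_nth[OF us(1)] by (simp add: tuple_coded_def)
  then have "has_bit (code S j (us ! i) (numv S i) y a) G \<or>
      (\<exists>i'<j. code S j (us ! i) (numv S i) y a = code S j (us0 ! i') (numv S i') y0 a)"
    using bits_G' closed y u by simp
  then show ?thesis
  proof
    assume "\<exists>i'<j. code S j (us ! i) (numv S i) y a = code S j (us0 ! i') (numv S i') y0 a"
    then obtain i' where "i' < j" "us ! i = us0 ! i'" "numv S i = numv S i'" "y = y0"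
      using code_eq_new_code[OF u numv_closed y numv_lt[OF i]] by blast
    then show ?thesis using numv_inj by blast
  qed simp
qed

lemma tuple_coded_new_member:
  assumes us: "bounded_tuple S j H us" "tuple_coded S E j a G' y0 us"
  shows "us = us0"
proof -
  have "us ! i = us0 ! i" if i: "i < j" for i
  proof -
    have "\<not> has_bit (code S j (us ! i) (numv S i) y0 a) G"
      using has_bit_code_imp_member[OF y0(1) numv_closed bounded_tuple_nth[OF us(1) i] y0(2) numv_lt[OF i]]
        y0(3) by blast
    then show ?thesis using tuple_coded_extended_cases[OF y0(1,2) us i] by blast
  qed
  then show ?thesis using us(1) us0(1) by (auto simp: bounded_tuple_def intro: nth_equalityI)
qed

lemma tuple_coded_old_member:
  assumes y: "y \<in> U" "y \<prec> a" "y \<noteq> y0" and us: "bounded_tuple S j H us" "tuple_coded S E j a G' y us"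
  shows "bounded_tuple S j G us \<and> tuple_coded S E j a G y us"
proof -
  have old: "has_bit (code S j (us ! i) (numv S i) y a) G" if i: "i < j" for i
    using tuple_coded_extended_cases[OF y(1,2) us i] y(3) by blast
  have "u \<prec> G" if u: "u \<in> set us" for u
  proof -
    obtain i where i: "i < j" "u = us ! i"
      using u us(1) by (auto simp: in_set_conv_nth bounded_tuple_def)
    show ?thesis
      using lt_of_has_bit_code[OF bounded_tuple_nth[OF us(1) i(1)] numv_closed y(1) closed(1) closed(3)
          y(2) numv_lt[OF i(1)] old[OF i(1)]] i(2) by simp
  qed
  then show ?thesis
    using us(1) old closed y bounded_tuple_nth[OF us(1)] by (simp add: bounded_tuple_def tuple_coded_def)
qed

lemma members_coded_extend: "members_coded S E j a \<alpha>' G'"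
  unfolding members_coded_def
proof (intro ballI impI)
  fix y assume y: "y \<in> U" "y \<prec> a" "bit_of S E y \<alpha>'"
  show "\<exists>us. bounded_tuple S j G' us \<and> tuple_coded S E j a G' y us"
  proof (cases "y = y0")
    case True
    then show ?thesis using us0_coded by blast
  next
    case False
    then have "has_bit y \<alpha>" using bits_\<alpha>' y closed' by simp
    then obtain us where us: "bounded_tuple S j G us" "tuple_coded S E j a G y us"
      using witness y closed unfolding witness_code_def members_coded_def by auto
    have "u \<prec> G'" if "u \<in> set us" for u
      using us(1) that lt_le_trans[of u G G'] closed closed' unfolding bounded_tuple_def by auto
    then have "bounded_tuple S j G' us" using us(1) by (simp add: bounded_tuple_def)
    moreover have "tuple_coded S E j a G' y us"
      using us bits_G' closed closed' y bounded_tuple_nth[OF us(1)] by (simp add: tuple_coded_def)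
    ultimately show ?thesis by blast
  qed
qed

lemma codes_members_only_extend: "codes_members_only S E j a \<alpha>' G'"
  unfolding codes_members_only_def
proof (intro ballI impI)
  fix y i u assume U: "y \<in> U" "i \<in> U" "u \<in> U" and lt: "y \<prec> a" "i \<prec> numv S j" "u \<prec> G'"
    and "bit_of S E (code S j u i y a) G'"
  then have "has_bit (code S j u i y a) G \<or> (\<exists>i'<j. code S j u i y a = code S j (us0 ! i') (numv S i') y0 a)"
    using bits_G' closed closed' by simp
  then have "has_bit y \<alpha> \<or> y = y0"
    using has_bit_code_imp_member code_eq_new_code U lt by blast
  then show "bit_of S E y \<alpha>'" using bits_\<alpha>' U closed' by simp
qed

lemma coded_tuples_refute_extend: "coded_tuples_refute S E j p x e a \<alpha>' G'"
  unfolding coded_tuples_refute_def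
proof (intro ballI impI allI)
  fix y us assume y: "y \<in> U" "y \<prec> a" "bit_of S E y \<alpha>'"
    and us: "bounded_tuple S j G' us" "tuple_coded S E j a G' y us"
  show "\<not> sat S (prepend us (x ## y ## e)) p"
  proof (cases "y = y0")
    case True
    then show ?thesis using tuple_coded_new_member us us0 by simp
  next
    case False
    then have "has_bit y \<alpha>" using y bits_\<alpha>' closed' by simp
    then show ?thesis
      using tuple_coded_old_member[OF y(1,2) False us] witness y closed
      unfolding witness_code_def coded_tuples_refute_def by simp
  qed
qed

end

end

lemma witness_code_extend:
  assumes closed: "a \<in> U" "\<alpha> \<in> U" "G \<in> U" and bound: "\<alpha> \<prec> pow2 a"
    and witness: "witness_code S E j p x e a \<alpha> G"
    and y0: "y0 \<in> U" "y0 \<prec> a" "\<not> has_bit y0 \<alpha>"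
    and us0: "length us0 = j" "set us0 \<subseteq> U" "\<not> sat S (prepend us0 (x ## y0 ## e)) p"
  shows "\<exists>\<alpha>'\<in>U. \<alpha> \<prec> \<alpha>' \<and> \<alpha>' \<prec> pow2 a \<and> (\<exists>G'\<in>U. witness_code S E j p x e a \<alpha>' G')"
proof -
  note ctx = closed witness y0 us0
  define ks where "ks = map (\<lambda>i. code S j (us0 ! i) (numv S i) y0 a) [0..<j]"
  have "set ks \<subseteq> U" using us0_nth_closed[OF ctx] closed y0 by (auto simp: ks_def)
  moreover have "distinct ks"
    unfolding ks_def distinct_map
  proof (intro conjI inj_onI)
    fix i i' assume "i \<in> set [0..<j]" "i' \<in> set [0..<j]"
      and eq: "code S j (us0 ! i) (numv S i) y0 a = code S j (us0 ! i') (numv S i') y0 a"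
    then have "i < j" "i' < j" by simp_all
    then show "i = i'"
      using code_eq_new_code[OF ctx us0_nth_closed[OF ctx] numv_closed y0(1,2) numv_lt _ eq] numv_inj
      by blast
  qed simp
  moreover have "\<forall>k\<in>set ks. \<not> has_bit k G" using fresh_codes[OF ctx] by (auto simp: ks_def)
  ultimately obtain G' where G': "G' \<in> U" "G \<preceq> G'" "\<forall>k\<in>U. has_bit k G' \<longleftrightarrow> has_bit k G \<or> k \<in> set ks"
    using exists_add_bits[OF closed(3)] by blast
  have bits_G': "has_bit k G' \<longleftrightarrow> has_bit k G \<or> (\<exists>i<j. k = code S j (us0 ! i) (numv S i) y0 a)"
    if "k \<in> U" for k
    using G'(3) that by (auto simp: ks_def)
  define \<alpha>' where "\<alpha>' = \<alpha> \<oplus> pow2 y0"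
  have \<alpha>': "\<alpha>' \<in> U" "\<alpha> \<prec> \<alpha>'" "\<alpha>' \<prec> pow2 a"
    using lt_add_pos pow2_pos add_pow2_bound closed bound y0 by (simp_all add: \<alpha>'_def)
  have bits_\<alpha>': "\<And>k. k \<in> U \<Longrightarrow> has_bit k \<alpha>' \<longleftrightarrow> has_bit k \<alpha> \<or> k = y0"
    using has_bit_add_pow2 closed y0 by (simp add: \<alpha>'_def)
  note ext = ctx \<alpha>'(1) G'(1,2) bits_\<alpha>' bits_G'
  have "witness_code S E j p x e a \<alpha>' G'"
    unfolding witness_code_def
    using members_coded_extend[OF ext] codes_members_only_extend[OF ext]
      coded_tuples_refute_extend[OF ext]
    by blast
  then show ?thesis using \<alpha>' G' by blast
qed

end

section \<open>Descending from \<open>K\<close> to \<open>M\<close>\<close>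

lemma covering_witness_code_fm_refuted:
  assumes "sat S (\<alpha> ## a ## e) (covering_witness_code_fm E j \<sigma> p)"
    and "\<forall>x\<in>univ S. \<exists>y\<in>univ S. ls S y a \<and> sat S (x ## y ## e) \<sigma> \<and> sat S (x ## y ## e) (alls j p)"
  shows False
proof -
  have nonempty: "univ S \<noteq> {}" using assms(1) by (auto simp: covering_witness_code_fm_def)
  obtain x G where x: "x \<in> univ S"
    and members: "\<forall>y\<in>univ S. ls S y a \<longrightarrow> sat S (x ## y ## e) \<sigma> \<longrightarrow> bit_of S E y \<alpha>"
    and witness: "witness_code S E j p x e a \<alpha> G"
    using assms(1) unfolding sat_covering_witness_code_fm[OF nonempty] by blast
  obtain y where y: "y \<in> univ S" "ls S y a" "sat S (x ## y ## e) \<sigma>" "sat S (x ## y ## e) (alls j p)"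
    using assms(2) x by blast
  have "bit_of S E y \<alpha>" using members y by blast
  then obtain us where us: "bounded_tuple S j G us" "tuple_coded S E j a G y us"
    using witness y unfolding witness_code_def members_coded_def by blast
  then have "\<not> sat S (prepend us (x ## y ## e)) p"
    using witness y \<open>bit_of S E y \<alpha>\<close> unfolding witness_code_def coded_tuples_refute_def by blast
  moreover have "sat S (prepend us (x ## y ## e)) p"
    using y(4) us(1) unfolding sat_alls bounded_tuple_def by blast
  ultimately show False by contradiction
qed

lemma (in pa_model) end_extension_initial_segment:
  assumes "end_extension M S" "x \<in> U" "y \<in> univ M" "x \<prec> y"
  shows "x \<in> univ M"
  using assms lt_asym[of x y] unfolding end_extension_def by blast

text \<open>Otherwise \<open>M\<close>-induction up to \<open>N\<close> shows that every \<open>t < N\<close> has some \<open>\<alpha> \<ge> t\<close> below \<open>N\<close>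
  with \<open>Q \<alpha>\<close>, hence a strictly larger one; for \<open>t = N - 1\<close> there is no room.\<close>
lemma (in pa_model) M_induction_maximal:
  assumes MI: "M_induction k M S" and f: "sigma k f" and e: "env S e"
    and N: "N \<in> univ M" "N \<in> U"
    and sat_f: "\<And>t. t \<in> U \<Longrightarrow> sat S (t ## e) f \<longleftrightarrow> (\<exists>\<alpha>\<in>U. (t \<prec> \<alpha> \<or> t = \<alpha>) \<and> \<alpha> \<prec> N \<and> Q \<alpha>)"
    and start: "\<beta> \<in> U" "\<beta> \<prec> N" "Q \<beta>"
  shows "\<exists>\<alpha>\<in>U. \<alpha> \<prec> N \<and> Q \<alpha> \<and> (\<forall>\<alpha>'\<in>U. \<alpha> \<prec> \<alpha>' \<longrightarrow> \<alpha>' \<prec> N \<longrightarrow> \<not> Q \<alpha>')"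
proof (rule ccontr)
  assume "\<not> ?thesis"
  then have no_max: "\<And>\<alpha>. \<alpha> \<in> U \<Longrightarrow> \<alpha> \<prec> N \<Longrightarrow> Q \<alpha> \<Longrightarrow> \<exists>\<alpha>'\<in>U. \<alpha> \<prec> \<alpha>' \<and> \<alpha>' \<prec> N \<and> Q \<alpha>'"
    by blast
  have base: "sat S (\<zero> ## e) f" using sat_f[of "\<zero>"] start zero_le[OF start(1)] by auto
  have step: "\<forall>t\<in>U. t \<prec> N \<longrightarrow> sat S (t ## e) f \<longrightarrow> sat S ((t \<oplus> \<one>) ## e) f"
  proof (intro ballI impI)
    fix t assume t: "t \<in> U" "t \<prec> N" "sat S (t ## e) f"
    then obtain \<alpha> where \<alpha>: "\<alpha> \<in> U" "t \<prec> \<alpha> \<or> t = \<alpha>" "\<alpha> \<prec> N" "Q \<alpha>" using sat_f by blast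
    obtain \<alpha>' where \<alpha>': "\<alpha>' \<in> U" "t \<prec> \<alpha>'" "\<alpha>' \<prec> N" "Q \<alpha>'"
      using \<alpha> no_max[OF \<alpha>(1,3,4)] by blast
    have "t \<oplus> \<one> \<preceq> \<alpha>'" using lt_iff_add_one_le[of t \<alpha>'] \<alpha>' t by simp
    then show "sat S ((t \<oplus> \<one>) ## e) f" using sat_f[of "t \<oplus> \<one>"] \<alpha>' t by auto
  qed
  have all: "\<forall>t\<in>U. t \<prec> N \<longrightarrow> sat S (t ## e) f"
    using MI f e N(1) base step unfolding M_induction_def by blast
  obtain m where m: "m \<in> U" "m \<oplus> \<one> = N"
    using le_imp_add[of "\<one>" N] pos_imp_one_le[OF N(2) pos_of_gt[OF start(1) N(2) start(2)]] N(2)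
      add_commute[of "\<one>"] by auto
  then have "sat S (m ## e) f" using all lt_add_one[of m] by auto
  then obtain \<alpha> where \<alpha>: "\<alpha> \<in> U" "m \<prec> \<alpha> \<or> m = \<alpha>" "\<alpha> \<prec> N" "Q \<alpha>" using sat_f m by blast
  obtain \<alpha>' where \<alpha>': "\<alpha>' \<in> U" "\<alpha> \<prec> \<alpha>'" "\<alpha>' \<prec> N" using no_max[OF \<alpha>(1,3,4)] by blast
  show False
    using \<alpha> \<alpha>' m lt_add_one_iff[of \<alpha>' m] lt_add_one_iff[of \<alpha> m] lt_trans[of m \<alpha> \<alpha>'] lt_asym lt_irrefl
    by metis
qed

context idelta0_exp
begin

lemma witness_code_empty: "a \<in> U \<Longrightarrow> witness_code S E j p x e a \<zero> \<zero>"
  by (simp add: witness_code_def members_coded_def codes_members_only_def coded_tuples_refute_def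
      not_has_bit_zero)

lemma maximal_witness_code:
  assumes MI: "M_induction (Suc n) M S" and p: "sigma n p"
    and e: "env S e" and x: "x \<in> U" and a: "a \<in> U" and N: "pow2 a \<in> univ M"
  obtains \<alpha> G where "\<alpha> \<in> U" "\<alpha> \<prec> pow2 a" "G \<in> U" "witness_code S E j p x e a \<alpha> G"
    "\<And>y. y \<in> U \<Longrightarrow> y \<prec> a \<Longrightarrow> \<not> sat S (x ## y ## e) (alls j p) \<Longrightarrow> has_bit y \<alpha>"
proof -
  define Q where "Q \<alpha> \<longleftrightarrow> (\<exists>G\<in>U. witness_code S E j p x e a \<alpha> G)" for \<alpha>
  have env: "env S (x ## a ## pow2 a ## e)" using e x a by (simp add: env_cons)
  have sat_f: "sat S (t ## x ## a ## pow2 a ## e) (code_above_fm E j p) \<longleftrightarrow>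
      (\<exists>\<alpha>\<in>U. (t \<prec> \<alpha> \<or> t = \<alpha>) \<and> \<alpha> \<prec> pow2 a \<and> Q \<alpha>)" for t
    by (simp add: sat_code_above_fm[OF univ_nonempty] Q_def)
  have "Q \<zero>" using witness_code_empty[OF a] zero_closed unfolding Q_def by blast
  then obtain \<alpha> where \<alpha>: "\<alpha> \<in> U" "\<alpha> \<prec> pow2 a" "Q \<alpha>"
    and maximal: "\<forall>\<alpha>'\<in>U. \<alpha> \<prec> \<alpha>' \<longrightarrow> \<alpha>' \<prec> pow2 a \<longrightarrow> \<not> Q \<alpha>'"
    using M_induction_maximal[OF MI sigma_code_above_fm[OF delta0_E p] env N pow2_closed[OF a] sat_f
        zero_closed pow2_pos[OF a]]
    by blast
  then obtain G where G: "G \<in> U" "witness_code S E j p x e a \<alpha> G" unfolding Q_def by blast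
  have "has_bit y \<alpha>" if y: "y \<in> U" "y \<prec> a" "\<not> sat S (x ## y ## e) (alls j p)" for y
  proof (rule ccontr)
    assume "\<not> has_bit y \<alpha>"
    moreover obtain us where "length us = j" "set us \<subseteq> U" "\<not> sat S (prepend us (x ## y ## e)) p"
      using y(3) unfolding sat_alls by blast
    ultimately obtain \<alpha>' where "\<alpha>' \<in> U" "\<alpha> \<prec> \<alpha>'" "\<alpha>' \<prec> pow2 a" "Q \<alpha>'"
      using witness_code_extend[OF a \<alpha>(1) G(1) \<alpha>(2) G(2) y(1,2)] unfolding Q_def by blast
    then show False using maximal by blast
  qed
  then show ?thesis using that \<alpha> G by blast
qed

lemma pow2_in_elementary_submodel:
  assumes M: "univ M \<subseteq> U" and elem: "sigma_elementary (Suc k) M S" and a: "a \<in> univ M"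
  shows "pow2 a \<in> univ M"
proof -
  have env: "env M (a ## (\<lambda>_. a))" using a by (simp add: env_cons env_const)
  have sigma: "sigma (Suc k) (Ex (exp_fm E (Var 1) (Var 0)))"
    using delta0_E by (simp add: delta0_sigma)
  have "sat S (a ## (\<lambda>_. a)) (Ex (exp_fm E (Var 1) (Var 0)))"
    using exp_rel_pow2[of a] pow2_closed[of a] a M by (auto simp: sat_exp_fm_iff subsetD)
  then have "sat M (a ## (\<lambda>_. a)) (Ex (exp_fm E (Var 1) (Var 0)))"
    using elem env sigma unfolding sigma_elementary_def by blast
  then obtain z where z: "z \<in> univ M" "sat M (z ## a ## (\<lambda>_. a)) (exp_fm E (Var 1) (Var 0))"
    by auto
  then have "sat S (z ## a ## (\<lambda>_. a)) (exp_fm E (Var 1) (Var 0))"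
    using elem env delta0_E unfolding sigma_elementary_def by (simp add: delta0_sigma env_cons)
  then have "z = pow2 a" using exp_rel_iff a z M by (auto simp: sat_exp_fm_iff)
  then show ?thesis using z by simp
qed

lemma exists_bounded_witness:
  assumes ext: "end_extension M S" and elem: "sigma_elementary (Suc (Suc n)) M S"
    and MI: "M_induction (Suc n) M S" and \<sigma>: "sigma (Suc n) \<sigma>" and p: "sigma n p"
    and e: "env M e" and a: "a \<in> univ M" and c: "c \<in> U"
    and H: "\<forall>x\<in>univ M. \<exists>y\<in>univ M. ls M y a \<and> sat M (x ## y ## e) \<sigma> \<and> sat M (x ## y ## e) (alls j p)"
  shows "\<exists>y\<in>U. y \<prec> a \<and> sat S (c ## y ## e) \<sigma> \<and> sat S (c ## y ## e) (alls j p)"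
proof (rule ccontr)
  assume none: "\<not> ?thesis"
  have M: "univ M \<subseteq> U" using ext by (simp add: end_extension_def)
  have eS: "env S e" and aS: "a \<in> U" using env_mono[OF e M] a M by auto
  have N: "pow2 a \<in> univ M" using pow2_in_elementary_submodel[OF M elem a] .
  obtain \<alpha> G where \<alpha>: "\<alpha> \<in> U" "\<alpha> \<prec> pow2 a" and G: "G \<in> U" "witness_code S E j p c e a \<alpha> G"
    and contains: "\<And>y. y \<in> U \<Longrightarrow> y \<prec> a \<Longrightarrow> \<not> sat S (c ## y ## e) (alls j p) \<Longrightarrow> has_bit y \<alpha>"
    using maximal_witness_code[OF MI p eS c aS N] by blast
  have "sat S (\<alpha> ## a ## e) (covering_witness_code_fm E j \<sigma> p)"
    unfolding sat_covering_witness_code_fm[OF univ_nonempty] using c G contains none \<alpha>(1) by auto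
  moreover have \<alpha>M: "\<alpha> \<in> univ M"
    using end_extension_initial_segment[OF ext \<alpha>(1) N \<alpha>(2)] .
  ultimately have "sat M (\<alpha> ## a ## e) (covering_witness_code_fm E j \<sigma> p)"
    using elem sigma_covering_witness_code_fm[OF delta0_E \<sigma> p] e a unfolding sigma_elementary_def
    by (simp add: env_cons)
  then show False using H by (rule covering_witness_code_fm_refuted)
qed

end

lemma unbounded_from_nonstandard_witness:
  assumes ext: "end_extension M K" and elem: "sigma_elementary (Suc (Suc n)) M K"
    and \<sigma>: "sigma (Suc n) \<sigma>" and \<pi>: "pi (Suc n) \<pi>"
    and e: "env M e" and y: "y \<in> univ M"
    and c: "c \<in> univ K" "c \<notin> univ M" and sat: "sat K (c ## y ## e) \<sigma>" "sat K (c ## y ## e) \<pi>"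
  shows "\<forall>b\<in>univ M. \<exists>x\<in>univ M. ls M b x \<and> sat M (x ## y ## e) (Conj \<sigma> \<pi>)"
proof
  fix b assume b: "b \<in> univ M"
  have "sat K (b ## y ## e) (exists_above_fm \<sigma> \<pi>)"
    using sat_exists_above_fm[of K] c sat ext b unfolding end_extension_def by blast
  then have "sat M (b ## y ## e) (exists_above_fm \<sigma> \<pi>)"
    using elem sigma_exists_above_fm[OF \<sigma> \<pi>] e b y unfolding sigma_elementary_def
    by (simp add: env_cons)
  then show "\<exists>x\<in>univ M. ls M b x \<and> sat M (x ## y ## e) (Conj \<sigma> \<pi>)"
    using sat_exists_above_fm[of M] b by fastforce
qed

lemma IDelta0_exp_imp_idelta0_exp:
  assumes "IDelta0_exp S"
  obtains E where "idelta0_exp S E"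
proof -
  obtain E where E: "defines_exp S E"
    using assms by (auto simp: IDelta0_exp_def exp_ax_iff_defines_exp)
  have ID: "IDelta0 S" using assms by (simp add: IDelta0_exp_def)
  have "idelta0_exp S E"
    by (rule idelta0_exp.intro[OF idelta0.intro[OF pa_model.intro idelta0_axioms.intro]
          idelta0_exp_axioms.intro])
      (use ID ID[unfolded IDelta0_def] E in simp_all)
  then show ?thesis by (rule that)
qed

lemma (in idelta0_exp) WR_holds_in_elementary_submodel:
  assumes ext: "end_extension M S" and elem: "sigma_elementary (Suc (Suc n)) M S"
    and MI: "M_induction (Suc n) M S" and c: "c \<in> U" "c \<notin> univ M"
    and \<sigma>: "sigma (Suc n) \<sigma>" and \<pi>: "pi (Suc n) \<pi>"
  shows "WR_holds M (Conj \<sigma> \<pi>)"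
  unfolding WR_holds_def
proof (intro allI impI)
  fix e a assume e: "env M e" and a: "a \<in> univ M"
    and H: "\<forall>x\<in>univ M. \<exists>y\<in>univ M. ls M y a \<and> sat M (x ## y ## e) (Conj \<sigma> \<pi>)"
  obtain j p where \<pi>_alls: "\<pi> = alls j p" and p: "sigma n p" using pi_Suc_imp_alls[OF \<pi>] by blast
  have "\<forall>x\<in>univ M. \<exists>y\<in>univ M. ls M y a \<and> sat M (x ## y ## e) \<sigma> \<and> sat M (x ## y ## e) (alls j p)"
    using H by (simp add: \<pi>_alls)
  then obtain y where y: "y \<in> U" "y \<prec> a" "sat S (c ## y ## e) \<sigma>" "sat S (c ## y ## e) \<pi>"
    using exists_bounded_witness[OF ext elem MI \<sigma> p e a c(1)] unfolding \<pi>_alls by blast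
  have yM: "y \<in> univ M" using end_extension_initial_segment[OF ext y(1) a y(2)] .
  then have "ls M y a" using ext a y(2) by (simp add: end_extension_def)
  then show "\<exists>y\<in>univ M. ls M y a \<and> (\<forall>b\<in>univ M. \<exists>x\<in>univ M. ls M b x \<and> sat M (x ## y ## e) (Conj \<sigma> \<pi>))"
    using unbounded_from_nonstandard_witness[OF ext elem \<sigma> \<pi> e yM c y(3,4)] yM by blast
qed

theorem proposition5p8:
  fixes M K :: "'a struc" and n :: nat
  assumes "IDelta0_exp M"
    and "IDelta0_exp K"
    and "end_extension M K"
    and "univ K \<noteq> univ M"
    and "sigma_elementary (n + 2) M K"
    and "M_induction (n + 1) M K"
  shows "models_WR M (sigma_and_pi (n + 1))"
proof -
  obtain E where "idelta0_exp K E" using assms(2) by (rule IDelta0_exp_imp_idelta0_exp)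
  then interpret K: idelta0_exp K E .
  obtain c where c: "c \<in> univ K" "c \<notin> univ M"
    using assms(3,4) by (auto simp: end_extension_def)
  have "WR_holds M (Conj \<sigma> \<pi>)" if "sigma (Suc n) \<sigma>" "pi (Suc n) \<pi>" for \<sigma> \<pi>
    using K.WR_holds_in_elementary_submodel[OF assms(3) _ _ c that] assms(5,6) by simp
  then show ?thesis
    using assms(1) by (auto simp: models_WR_def IDelta0_exp_def sigma_and_pi_def)
qed

end
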